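(* Let $M(E,I)$ be a free partially commutative monoid, and let $E_v\subseteq E$, $v\in V$, be the maximal subsets of mutually commuting generators. Let $\bigcup_{v\in V}\mathfrak F M(E_v)$ denote the full subcategory of $\mathfrak F M(E,I)$ whose objects are the elements of $\bigcup_{v\in V}M(E_v)$, where $M(E_v)\subseteq M(E,I)$ is the submonoid generated by $E_v$. Then the inclusion $\bigcup_{v\in V}\mathfrak F M(E_v)\subseteq \mathfrak F M(E,I)$ is strong coinitial.
   Context: Given a set $E$ (not necessarily finite) and an irreflexive symmetric relation $I\subseteq E\times E$, the free partially commutative monoid $M(E,I)$ is the monoid with generators $E$ and relations $ab=ba$ for all $(a,b)\in I$. A subset $S\subseteq E$ consists of mutually commuting generators if $(a,b)\in I$ for all distinct $a,b\in S$. For a monoid $M$, the factorization category $\mathfrak FM$ has objects the elements of $M$ and morphisms $\alpha\to\beta$ the pairs $(f,g)\in M\times M$ with $g\alpha f=\beta$; composition of $(f_1,g_1):\alpha\to\beta$ and $(f_2,g_2):\beta\to\gamma$ is $(f_1f_2,g_2g_1)$. A functor $S:\mathcal C\to\mathcal D$ between small categories is strong coinitial if for every object $d$ of $\mathcal D$ the comma category $S/d$ (objects: pairs $(c,\alpha)$ with $\alpha\in\mathcal D(S(c),d)$; morphisms $(c_1,\alpha_1)\to(c_2,\alpha_2)$: $f\in\mathcal C(c_1,c_2)$ with $\alpha_2\circ S(f)=\alpha_1$) is connected and acyclic, i.e. $\varinjlim{}_n^{S/d}\Delta\mathbb Z=0$ for $n>0$ and $\varinjlim{}_0^{S/d}\Delta\mathbb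 Z=\mathbb Z$; here $\Delta\mathbb Z$ is the constant functor with value $\mathbb Z$ and $\varinjlim{}_n$ denotes the left derived functors of the colimit. *)

theory Defs
  imports Main
begin

text \<open>Elements of M(E,I) are equivalence classes of words over E, where two words are
equivalent iff one is obtained from the other by finitely many swaps of adjacent
commuting letters.\<close>

inductive swap_step :: "('a \<times> 'a) set \<Rightarrow> 'a list \<Rightarrow> 'a list \<Rightarrow> bool" for I where
  "(a, b) \<in> I \<Longrightarrow> swap_step I (u @ [a, b] @ v) (u @ [b, a] @ v)"

definition teq :: "('a \<times> 'a) set \<Rightarrow> 'a list \<Rightarrow> 'a list \<Rightarrow> bool" where
  "teq I = (swap_step I)\<^sup>*\<^sup>*"

definition trace :: "('a \<times> 'a) set \<Rightarrow> 'a list \<Rightarrow> 'a list set" where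
  "trace I w = {v. teq I w v}"

definition pcmon :: "'a set \<Rightarrow> ('a \<times> 'a) set \<Rightarrow> 'a list set set" where
  "pcmon E I = trace I ` lists E"

definition tmult :: "('a \<times> 'a) set \<Rightarrow> 'a list set \<Rightarrow> 'a list set \<Rightarrow> 'a list set" where
  "tmult I \<alpha> \<beta> = (\<Union>{trace I (u @ v) | u v. u \<in> \<alpha> \<and> v \<in> \<beta>})"

definition commuting :: "('a \<times> 'a) set \<Rightarrow> 'a set \<Rightarrow> bool" where
  "commuting I S \<longleftrightarrow> (\<forall>a\<in>S. \<forall>b\<in>S. a \<noteq> b \<longrightarrow> (a, b) \<in> I)"

definition maximal_commuting :: "'a set \<Rightarrow> ('a \<times> 'a) set \<Rightarrow> 'a set \<Rightarrow> bool" where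
  "maximal_commuting E I S \<longleftrightarrow> S \<subseteq> E \<and> commuting I S \<and>
     (\<forall>T. T \<subseteq> E \<and> commuting I T \<and> S \<subseteq> T \<longrightarrow> T = S)"

text \<open>Objects of the union of the factorization categories of the submonoids M(E_v):
elements of M(E,I) lying in the submonoid generated by some maximal commuting E_v.\<close>
definition union_objs :: "'a set \<Rightarrow> ('a \<times> 'a) set \<Rightarrow> 'a list set set" where
  "union_objs E I = {trace I w | w S. maximal_commuting E I S \<and> w \<in> lists S}"

definition fhom :: "'a set \<Rightarrow> ('a \<times> 'a) set \<Rightarrow> 'a list set \<Rightarrow> 'a list set
    \<Rightarrow> ('a list set \<times> 'a list set) set" where
  "fhom E I \<alpha> \<beta> = {(f, g). f \<in> pcmon E I \<and> g \<in> pcmon E I \<and> tmult I (tmult I g \<alpha>) f = \<beta>}"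

text \<open>Composition: fcomp I h2 h1 is "h2 after h1"; for (f1,g1): \<alpha>\<rightarrow>\<beta> and (f2,g2): \<beta>\<rightarrow>\<gamma>
it is (f1 f2, g2 g1).\<close>
definition fcomp :: "('a \<times> 'a) set \<Rightarrow> ('a list set \<times> 'a list set) \<Rightarrow> ('a list set \<times> 'a list set)
    \<Rightarrow> ('a list set \<times> 'a list set)" where
  "fcomp I h2 h1 = (tmult I (fst h1) (fst h2), tmult I (snd h2) (snd h1))"

definition comma_objs :: "'a set \<Rightarrow> ('a \<times> 'a) set \<Rightarrow> 'a list set
    \<Rightarrow> ('a list set \<times> ('a list set \<times> 'a list set)) set" where
  "comma_objs E I d = {(c, h). c \<in> union_objs E I \<and> h \<in> fhom E I c d}"

definition comma_hom :: "'a set \<Rightarrow> ('a \<times> 'a) set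
    \<Rightarrow> ('a list set \<times> ('a list set \<times> 'a list set))
    \<Rightarrow> ('a list set \<times> ('a list set \<times> 'a list set))
    \<Rightarrow> ('a list set \<times> 'a list set) set" where
  "comma_hom E I x y = {h. h \<in> fhom E I (fst x) (fst y) \<and> fcomp I (snd y) h = snd x}"

text \<open>A small category is given by an object set Ob, hom-sets Hom x y and composition
cmp g f (= g \<circ> f).\<close>

definition nerve_simplices :: "'o set \<Rightarrow> ('o \<Rightarrow> 'o \<Rightarrow> 'm set) \<Rightarrow> nat \<Rightarrow> ('o list \<times> 'm list) set" where
  "nerve_simplices Ob Hom n = {(xs, fs). length xs = Suc n \<and> length fs = n \<and> set xs \<subseteq> Ob \<and>
      (\<forall>i<n. fs ! i \<in> Hom (xs ! i) (xs ! Suc i))}"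

definition face :: "('m \<Rightarrow> 'm \<Rightarrow> 'm) \<Rightarrow> nat \<Rightarrow> nat \<Rightarrow> ('o list \<times> 'm list) \<Rightarrow> ('o list \<times> 'm list)" where
  "face cmp n i s = (let xs = fst s; fs = snd s in
     if i = 0 then (tl xs, tl fs)
     else if i = n then (butlast xs, butlast fs)
     else (take i xs @ drop (Suc i) xs,
           take (i - 1) fs @ [cmp (fs ! i) (fs ! (i - 1))] @ drop (Suc i) fs))"

definition is_chain :: "'o set \<Rightarrow> ('o \<Rightarrow> 'o \<Rightarrow> 'm set) \<Rightarrow> nat \<Rightarrow> ('o list \<times> 'm list \<Rightarrow> int) \<Rightarrow> bool" where
  "is_chain Ob Hom n c \<longleftrightarrow> finite {s. c s \<noteq> 0} \<and> {s. c s \<noteq> 0} \<subseteq> nerve_simplices Ob Hom n"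

definition bdry :: "('m \<Rightarrow> 'm \<Rightarrow> 'm) \<Rightarrow> nat \<Rightarrow> ('o list \<times> 'm list \<Rightarrow> int) \<Rightarrow> ('o list \<times> 'm list \<Rightarrow> int)" where
  "bdry cmp n c = (\<lambda>t. \<Sum>s\<in>{s. c s \<noteq> 0}. \<Sum>i\<le>n. if face cmp n i s = t then (-1) ^ i * c s else 0)"

text \<open>Connected and acyclic: H_0 = \<int> (via the augmentation) and H_n = 0 for n > 0;
i.e. the augmented integral chain complex of the nerve is exact.\<close>
definition connected_acyclic :: "'o set \<Rightarrow> ('o \<Rightarrow> 'o \<Rightarrow> 'm set) \<Rightarrow> ('m \<Rightarrow> 'm \<Rightarrow> 'm) \<Rightarrow> bool" where
  "connected_acyclic Ob Hom cmp \<longleftrightarrow>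
     Ob \<noteq> {} \<and>
     (\<forall>c. is_chain Ob Hom 0 c \<and> (\<Sum>s\<in>{s. c s \<noteq> 0}. c s) = 0 \<longrightarrow>
          (\<exists>b. is_chain Ob Hom 1 b \<and> bdry cmp 1 b = c)) \<and>
     (\<forall>n\<ge>1. \<forall>c. is_chain Ob Hom n c \<and> bdry cmp n c = (\<lambda>_. 0) \<longrightarrow>
          (\<exists>b. is_chain Ob Hom (Suc n) b \<and> bdry cmp (Suc n) b = c))"

end

(*
  Since morphisms of the factorization category cancel, the comma category over d = [w] is
  thin, and its homology is that of the nerve of the relation "there is a morphism". Such a
  nerve is acyclic as soon as a zigzag of pointwise comparable monotone endomaps joins the
  identity to a constant map: comparable maps are chain homotopic through the prism operator.

  By the projection lemma, a factorization g c f = w is determined by the order ideals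
  G \<subseteq> H of occurrences of letters of w covered by g and by g c, the middle part H - G
  consisting of pairwise independent letters; a morphism x \<rightarrow> y exists exactly when
  G_y \<subseteq> G_x and H_x \<subseteq> H_y. Truncating G and H to the occurrences among the first j
  letters of w, alternately for H and for G, gives the zigzag from the identity (j = |w|) to
  the constant object 1 1 w (j = 0). The middle part stays commuting: the one occurrence that
  H may gain over G is independent of every earlier occurrence outside the ideal G.
*)

theory Submission
  imports Defs "HOL-Library.Poly_Mapping"
begin

section \<open>Simplicial chains of a relation\<close>

definition remove_nth :: "nat \<Rightarrow> 'a list \<Rightarrow> 'a list" where
  "remove_nth i xs = take i xs @ drop (Suc i) xs"

lemma remove_nth_remove_nth:
  assumes "i < j" "j < length xs"
  shows "remove_nth i (remove_nth j xs) = remove_nth (j - 1) (remove_nth i xs)"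
  using assms unfolding remove_nth_def by (simp add: drop_take)

lemma remove_nth_replicate: "i < k \<Longrightarrow> remove_nth i (replicate k x) = replicate (k - 1) x"
  unfolding remove_nth_def by (simp add: min_def flip: replicate_add)

definition signed :: "nat \<Rightarrow> ('b \<Rightarrow>\<^sub>0 int) \<Rightarrow> ('b \<Rightarrow>\<^sub>0 int)" where
  "signed i x = frag_cmul ((-1) ^ i) x"

lemma signed_Suc: "signed (Suc i) x = - signed i x"
  by (simp add: signed_def)

lemma signed_pred: "0 < i \<Longrightarrow> signed i x = - signed (i - 1) x"
  by (cases i) (auto simp: signed_Suc)

lemma signed_add: "signed (i + j) x = signed i (signed j x)"
  by (simp add: signed_def power_add)

lemma signed_signed: "signed i (signed i x) = x"
  by (simp add: signed_def flip: power_add)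

lemma signed_sum: "signed i (sum f A) = (\<Sum>a\<in>A. signed i (f a))"
  by (simp add: signed_def frag_cmul_sum)

lemma signed_plus: "signed i (x + y) = signed i x + signed i y"
  by (simp add: signed_def frag_cmul_distrib2)

lemma signed_zero [simp]: "signed i 0 = 0"
  by (simp add: signed_def)

lemma signed_minus: "signed i (- x) = - signed i x"
  unfolding signed_def by (rule poly_mapping_eqI) (simp add: lookup_uminus)

lemma signed_diff: "signed i (x - y) = signed i x - signed i y"
  unfolding signed_def by (rule poly_mapping_eqI) (simp add: lookup_minus algebra_simps)

lemma frag_extend_signed: "frag_extend f (signed i x) = signed i (frag_extend f x)"
  by (simp add: signed_def frag_extend_cmul)

lemma sum_signed_atMost: "(\<Sum>i\<le>n. signed i x) = (if even n then x else 0)"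
  by (induction n) (auto simp: signed_def)

lemma frag_extend_diff_fun: "frag_extend f z - frag_extend g z = frag_extend (\<lambda>x. f x - g x) z"
proof -
  have cmul_diff: "frag_cmul c (a - b) = frag_cmul c a - frag_cmul c b" for c and a b :: "_ \<Rightarrow>\<^sub>0 int"
    by (rule poly_mapping_eqI) (simp add: lookup_minus algebra_simps)
  show ?thesis
    unfolding frag_extend_def by (simp only: cmul_diff sum_subtractf)
qed

definition simplex_boundary :: "nat \<Rightarrow> 'a list \<Rightarrow> ('a list \<Rightarrow>\<^sub>0 int)" where
  "simplex_boundary n xs = (\<Sum>i\<le>n. signed i (frag_of (remove_nth i xs)))"

definition chain_boundary :: "nat \<Rightarrow> ('a list \<Rightarrow>\<^sub>0 int) \<Rightarrow> ('a list \<Rightarrow>\<^sub>0 int)" where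
  "chain_boundary n = frag_extend (simplex_boundary n)"

lemma chain_boundary_diff: "chain_boundary n (a - b) = chain_boundary n a - chain_boundary n b"
  by (simp add: chain_boundary_def frag_extend_diff)

lemma chain_boundary_add: "chain_boundary n (a + b) = chain_boundary n a + chain_boundary n b"
  by (simp add: chain_boundary_def frag_extend_add)

lemma chain_boundary_cmul: "chain_boundary n (frag_cmul k a) = frag_cmul k (chain_boundary n a)"
  by (simp add: chain_boundary_def frag_extend_cmul)

lemma simplex_boundary_replicate:
  "simplex_boundary n (replicate (Suc n) x) = (if even n then frag_of (replicate n x) else 0)"
proof -
  have "simplex_boundary n (replicate (Suc n) x) = (\<Sum>i\<le>n. signed i (frag_of (replicate n x)))"
    unfolding simplex_boundary_def by (rule sum.cong) (simp_all add: remove_nth_replicate del: replicate_Suc)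
  then show ?thesis by (simp add: sum_signed_atMost)
qed

lemma simplex_boundary_boundary:
  assumes len: "length xs = Suc (Suc n)"
  shows "chain_boundary n (simplex_boundary (Suc n) xs) = 0"
proof -
  define Y where "Y i j = signed (i + j) (frag_of (remove_nth i (remove_nth j xs)))" for i j
  define Lo where "Lo = {(i, j). j \<le> i \<and> i \<le> n}"
  define Hi where "Hi = {(i, j). i < j \<and> j \<le> Suc n}"
  have fin: "finite Lo" "finite Hi"
    unfolding Lo_def Hi_def by (auto intro: finite_subset[of _ "{..Suc n} \<times> {..Suc n}"])
  have "chain_boundary n (simplex_boundary (Suc n) xs) = (\<Sum>j\<le>Suc n. \<Sum>i\<le>n. Y i j)"
    unfolding chain_boundary_def simplex_boundary_def Y_def
    by (simp only: frag_extend_sum[OF finite_atMost] o_def frag_extend_signed frag_extend_of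
        signed_sum signed_add add.commute)
  also have "\<dots> = (\<Sum>(i, j)\<in>Lo \<union> Hi. Y i j)"
    by (subst sum.swap, subst sum.cartesian_product)
       (rule sum.cong, auto simp: Lo_def Hi_def)
  also have "\<dots> = (\<Sum>(i, j)\<in>Lo. Y i j) + (\<Sum>(i, j)\<in>Hi. Y i j)"
    by (rule sum.union_disjoint) (use fin in \<open>auto simp: Lo_def Hi_def\<close>)
  also have "(\<Sum>(i, j)\<in>Hi. Y i j) = (\<Sum>(i, j)\<in>Lo. - Y i j)"
  proof (rule sum.reindex_bij_witness[where i="\<lambda>(i, j). (j, Suc i)" and j="\<lambda>(i, j). (j - 1, i)"])
    fix p assume "p \<in> Hi"
    then obtain i j where p: "p = (i, j)" "i < j" "j \<le> Suc n" by (auto simp: Hi_def)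
    then have "remove_nth i (remove_nth j xs) = remove_nth (j - 1) (remove_nth i xs)"
      using len by (intro remove_nth_remove_nth) auto
    moreover have "j - 1 + i = i + j - 1" using p by simp
    ultimately show "(case (\<lambda>(i, j). (j - 1, i)) p of (i, j) \<Rightarrow> - Y i j) = (case p of (i, j) \<Rightarrow> Y i j)"
      using p by (simp add: Y_def signed_pred[of "i + j"])
  qed (auto simp: Lo_def Hi_def)
  finally show ?thesis by (simp add: split_def sum_negf)
qed

lemma chain_boundary_boundary:
  assumes "\<And>xs. xs \<in> Poly_Mapping.keys b \<Longrightarrow> length xs = Suc (Suc n)"
  shows "chain_boundary n (chain_boundary (Suc n) b) = 0"
proof -
  have "chain_boundary n (chain_boundary (Suc n) b) = frag_extend (\<lambda>xs. chain_boundary n (simplex_boundary (Suc n) xs)) b"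
    unfolding chain_boundary_def using subset_UNIV
    by (induction b rule: frag_induction) (auto simp: frag_extend_diff)
  also have "\<dots> = 0"
    by (rule frag_extend_eq_0) (simp add: assms simplex_boundary_boundary)
  finally show ?thesis .
qed

definition prism :: "('a \<Rightarrow> 'b) \<Rightarrow> ('a \<Rightarrow> 'b) \<Rightarrow> nat \<Rightarrow> 'a list \<Rightarrow> 'b list" where
  "prism F G i xs = map F (take (Suc i) xs) @ map G (drop i xs)"

definition switch_map :: "('a \<Rightarrow> 'b) \<Rightarrow> ('a \<Rightarrow> 'b) \<Rightarrow> nat \<Rightarrow> 'a list \<Rightarrow> 'b list" where
  "switch_map F G i xs = map F (take i xs) @ map G (drop i xs)"

definition prism_operator :: "('a \<Rightarrow> 'b) \<Rightarrow> ('a \<Rightarrow> 'b) \<Rightarrow> nat \<Rightarrow> 'a list \<Rightarrow> ('b list \<Rightarrow>\<^sub>0 int)" where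
  "prism_operator F G n xs = (\<Sum>i<n. signed i (frag_of (prism F G i xs)))"

lemma remove_nth_prism_less:
  "j < i \<Longrightarrow> i < length xs \<Longrightarrow> remove_nth j (prism F G i xs) = prism F G (i - 1) (remove_nth j xs)"
  unfolding remove_nth_def prism_def by (simp add: take_map drop_map drop_take)

lemma remove_nth_prism_self: "i < length xs \<Longrightarrow> remove_nth i (prism F G i xs) = switch_map F G i xs"
  unfolding remove_nth_def prism_def switch_map_def by (simp add: take_map drop_map)

lemma remove_nth_prism_Suc: "i < length xs \<Longrightarrow> remove_nth (Suc i) (prism F G i xs) = switch_map F G (Suc i) xs"
  unfolding remove_nth_def prism_def switch_map_def by (simp add: take_map drop_map)

lemma remove_nth_prism_greater:
  "Suc i < j \<Longrightarrow> j \<le> length xs \<Longrightarrow> remove_nth j (prism F G i xs) = prism F G i (remove_nth (j - 1) xs)"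
  unfolding remove_nth_def prism_def by (simp add: take_map drop_map take_drop)

lemma simplex_boundary_prism:
  assumes "length xs = Suc n" "i \<le> n"
  shows "simplex_boundary (Suc n) (prism F G i xs) =
           (\<Sum>j<i. signed j (frag_of (prism F G (i - 1) (remove_nth j xs))))
         + signed i (frag_of (switch_map F G i xs)) - signed i (frag_of (switch_map F G (Suc i) xs))
         + (\<Sum>j\<in>{Suc (Suc i)..Suc n}. signed j (frag_of (prism F G i (remove_nth (j - 1) xs))))"
proof -
  define f where "f j = signed j (frag_of (remove_nth j (prism F G i xs)))" for j
  have "simplex_boundary (Suc n) (prism F G i xs) = sum f (({..<i} \<union> {i, Suc i}) \<union> {Suc (Suc i)..Suc n})"
    unfolding simplex_boundary_def f_def by (rule sum.cong) (use assms in auto)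
  also have "\<dots> = sum f ({..<i} \<union> {i, Suc i}) + sum f {Suc (Suc i)..Suc n}"
    by (rule sum.union_disjoint) auto
  also have "sum f ({..<i} \<union> {i, Suc i}) = sum f {..<i} + f i + f (Suc i)"
    by (subst sum.union_disjoint) auto
  finally have "simplex_boundary (Suc n) (prism F G i xs) =
      sum f {..<i} + f i + f (Suc i) + sum f {Suc (Suc i)..Suc n}" .
  then show ?thesis
    using assms by (simp add: f_def remove_nth_prism_less remove_nth_prism_self remove_nth_prism_Suc
        remove_nth_prism_greater signed_Suc)
qed

lemma prism_operator_simplex_boundary:
  "frag_extend (prism_operator F G n) (simplex_boundary n xs) =
     (\<Sum>(i, j)\<in>{..<n} \<times> {..n}. signed (i + j) (frag_of (prism F G i (remove_nth j xs))))"
proof -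
  have "frag_extend (prism_operator F G n) (simplex_boundary n xs) =
      (\<Sum>j\<le>n. \<Sum>i<n. signed (i + j) (frag_of (prism F G i (remove_nth j xs))))"
    unfolding prism_operator_def simplex_boundary_def
    by (simp add: frag_extend_sum frag_extend_signed o_def signed_sum add.commute flip: signed_add)
  also have "\<dots> = (\<Sum>i<n. \<Sum>j\<le>n. signed (i + j) (frag_of (prism F G i (remove_nth j xs))))"
    by (rule sum.swap)
  finally show ?thesis
    by (simp add: sum.cartesian_product)
qed

text \<open>The terms of both composites that do not involve the switch maps cancel in pairs.\<close>

lemma prism_operator_homotopy:
  assumes len: "length xs = Suc n"
  shows "frag_extend (simplex_boundary (Suc n)) (prism_operator F G (Suc n) xs)
         + frag_extend (prism_operator F G n) (simplex_boundary n xs)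
         = frag_of (map G xs) - frag_of (map F xs)"
proof -
  define P where "P i j = frag_of (prism F G i (remove_nth j xs))" for i j
  define Q where "Q i = frag_of (switch_map F G i xs)" for i
  define Lo where "Lo = {(i, j). j \<le> i \<and> i < n}"
  define Hi where "Hi = {(i, j). i < j \<and> j \<le> n}"
  have fin: "finite Lo" "finite Hi"
    unfolding Lo_def Hi_def by (auto intro: finite_subset[of _ "{..n} \<times> {..n}"])
  have "frag_extend (prism_operator F G n) (simplex_boundary n xs) = (\<Sum>(i, j)\<in>Lo \<union> Hi. signed (i + j) (P i j))"
    unfolding prism_operator_simplex_boundary P_def by (rule sum.cong) (auto simp: Lo_def Hi_def)
  also have "\<dots> = (\<Sum>(i, j)\<in>Lo. signed (i + j) (P i j)) + (\<Sum>(i, j)\<in>Hi. signed (i + j) (P i j))"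
    by (rule sum.union_disjoint) (use fin in \<open>auto simp: Lo_def Hi_def\<close>)
  finally have PD: "frag_extend (prism_operator F G n) (simplex_boundary n xs) =
      (\<Sum>(i, j)\<in>Lo. signed (i + j) (P i j)) + (\<Sum>(i, j)\<in>Hi. signed (i + j) (P i j))" .
  have "frag_extend (simplex_boundary (Suc n)) (prism_operator F G (Suc n) xs) =
      (\<Sum>i<Suc n. signed i (simplex_boundary (Suc n) (prism F G i xs)))"
    unfolding prism_operator_def
    by (simp only: frag_extend_sum[OF finite_lessThan] o_def frag_extend_signed frag_extend_of)
  also have "\<dots> = (\<Sum>i<Suc n. (\<Sum>j<i. signed (i + j) (P (i - 1) j)) + (Q i - Q (Suc i))
       + (\<Sum>j\<in>{Suc (Suc i)..Suc n}. signed (i + j) (P i (j - 1))))"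
    using len by (intro sum.cong) (simp_all add: simplex_boundary_prism P_def Q_def signed_plus
        signed_diff signed_minus signed_sum signed_signed signed_add signed_Suc)
  also have "\<dots> = (\<Sum>i<Suc n. \<Sum>j<i. signed (i + j) (P (i - 1) j)) + (\<Sum>i<Suc n. Q i - Q (Suc i))
       + (\<Sum>i<Suc n. \<Sum>j\<in>{Suc (Suc i)..Suc n}. signed (i + j) (P i (j - 1)))"
    by (simp only: sum.distrib)
  also have "(\<Sum>i<Suc n. \<Sum>j<i. signed (i + j) (P (i - 1) j)) = (\<Sum>(i, j)\<in>Lo. - signed (i + j) (P i j))"
    by (subst sum.Sigma, simp, simp,
        rule sum.reindex_bij_witness[where i="\<lambda>(i, j). (Suc i, j)" and j="\<lambda>(i, j). (i - 1, j)"])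
       (auto simp: Lo_def signed_Suc signed_pred[of "_ + _"])
  also have "(\<Sum>i<Suc n. \<Sum>j\<in>{Suc (Suc i)..Suc n}. signed (i + j) (P i (j - 1)))
      = (\<Sum>(i, j)\<in>Hi. - signed (i + j) (P i j))"
    by (subst sum.Sigma, simp, simp,
        rule sum.reindex_bij_witness[where i="\<lambda>(i, j). (i, Suc j)" and j="\<lambda>(i, j). (i, j - 1)"])
       (auto simp: Hi_def signed_Suc signed_pred[of "_ + _"])
  also have "(\<Sum>i<Suc n. Q i - Q (Suc i)) = Q 0 - Q (Suc n)"
    by (rule sum_lessThan_telescope')
  finally show ?thesis
    using PD len by (simp add: Q_def switch_map_def split_def sum_negf)
qed

definition rel_simplices :: "'o set \<Rightarrow> ('o \<Rightarrow> 'o \<Rightarrow> bool) \<Rightarrow> nat \<Rightarrow> 'o list set" where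
  "rel_simplices Ob R n = {xs. length xs = Suc n \<and> set xs \<subseteq> Ob \<and> successively R xs}"

definition rel_chains :: "'o set \<Rightarrow> ('o \<Rightarrow> 'o \<Rightarrow> bool) \<Rightarrow> nat \<Rightarrow> ('o list \<Rightarrow>\<^sub>0 int) set" where
  "rel_chains Ob R n = {z. Poly_Mapping.keys z \<subseteq> rel_simplices Ob R n}"

definition rel_cycles :: "'o set \<Rightarrow> ('o \<Rightarrow> 'o \<Rightarrow> bool) \<Rightarrow> nat \<Rightarrow> ('o list \<Rightarrow>\<^sub>0 int) set" where
  "rel_cycles Ob R n = {z \<in> rel_chains Ob R n. 0 < n \<longrightarrow> chain_boundary n z = 0}"

definition rel_boundaries :: "'o set \<Rightarrow> ('o \<Rightarrow> 'o \<Rightarrow> bool) \<Rightarrow> nat \<Rightarrow> ('o list \<Rightarrow>\<^sub>0 int) set" where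
  "rel_boundaries Ob R n = chain_boundary (Suc n) ` rel_chains Ob R (Suc n)"

definition augmentation :: "('b \<Rightarrow>\<^sub>0 int) \<Rightarrow> int" where
  "augmentation z = (\<Sum>x\<in>Poly_Mapping.keys z. Poly_Mapping.lookup z x)"

definition rel_acyclic :: "'o set \<Rightarrow> ('o \<Rightarrow> 'o \<Rightarrow> bool) \<Rightarrow> bool" where
  "rel_acyclic Ob R \<longleftrightarrow> Ob \<noteq> {} \<and>
     (\<forall>n. \<forall>z\<in>rel_cycles Ob R n. (n = 0 \<longrightarrow> augmentation z = 0) \<longrightarrow> z \<in> rel_boundaries Ob R n)"

definition chain_map :: "('a \<Rightarrow> 'b) \<Rightarrow> ('a list \<Rightarrow>\<^sub>0 int) \<Rightarrow> ('b list \<Rightarrow>\<^sub>0 int)" where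
  "chain_map F = frag_extend (\<lambda>xs. frag_of (map F xs))"

definition homologous_maps :: "'o set \<Rightarrow> ('o \<Rightarrow> 'o \<Rightarrow> bool) \<Rightarrow> ('o \<Rightarrow> 'o) \<Rightarrow> ('o \<Rightarrow> 'o) \<Rightarrow> bool" where
  "homologous_maps Ob R F G \<longleftrightarrow>
     (\<forall>n. \<forall>z\<in>rel_cycles Ob R n. chain_map G z - chain_map F z \<in> rel_boundaries Ob R n)"

lemma rel_chains_diff: "a \<in> rel_chains Ob R n \<Longrightarrow> b \<in> rel_chains Ob R n \<Longrightarrow> a - b \<in> rel_chains Ob R n"
  unfolding rel_chains_def using keys_diff[of a b] by blast

lemma rel_chains_add: "a \<in> rel_chains Ob R n \<Longrightarrow> b \<in> rel_chains Ob R n \<Longrightarrow> a + b \<in> rel_chains Ob R n"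
  unfolding rel_chains_def using keys_add[of a b] by blast

lemma rel_chains_cmul: "a \<in> rel_chains Ob R n \<Longrightarrow> frag_cmul k a \<in> rel_chains Ob R n"
  unfolding rel_chains_def using keys_cmul[of k a] by blast

lemma zero_in_rel_boundaries: "0 \<in> rel_boundaries Ob R n"
  unfolding rel_boundaries_def rel_chains_def chain_boundary_def by (auto intro: image_eqI[of _ _ 0])

lemma rel_boundaries_diff:
  "a \<in> rel_boundaries Ob R n \<Longrightarrow> b \<in> rel_boundaries Ob R n \<Longrightarrow> a - b \<in> rel_boundaries Ob R n"
  unfolding rel_boundaries_def by (auto simp flip: chain_boundary_diff intro: rel_chains_diff)

lemma rel_boundaries_add:
  "a \<in> rel_boundaries Ob R n \<Longrightarrow> b \<in> rel_boundaries Ob R n \<Longrightarrow> a + b \<in> rel_boundaries Ob R n"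
  unfolding rel_boundaries_def by (auto simp flip: chain_boundary_add intro: rel_chains_add)

lemma rel_boundaries_cmul: "a \<in> rel_boundaries Ob R n \<Longrightarrow> frag_cmul k a \<in> rel_boundaries Ob R n"
  unfolding rel_boundaries_def by (auto simp flip: chain_boundary_cmul intro: rel_chains_cmul)

lemma chain_boundary_rel_boundaries:
  "0 < n \<Longrightarrow> z \<in> rel_boundaries Ob R n \<Longrightarrow> chain_boundary n z = 0"
  unfolding rel_boundaries_def rel_chains_def rel_simplices_def
  by (cases n) (auto intro!: chain_boundary_boundary)

lemma homologous_maps_refl: "homologous_maps Ob R F F"
  by (simp add: homologous_maps_def zero_in_rel_boundaries)

lemma homologous_maps_sym: "homologous_maps Ob R F G \<Longrightarrow> homologous_maps Ob R G F"
  unfolding homologous_maps_def using rel_boundaries_diff[OF zero_in_rel_boundaries] by fastforce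

lemma homologous_maps_trans:
  "homologous_maps Ob R F G \<Longrightarrow> homologous_maps Ob R G K \<Longrightarrow> homologous_maps Ob R F K"
  unfolding homologous_maps_def using rel_boundaries_add by fastforce

lemma successively_map_monotone_on:
  "successively R xs \<Longrightarrow> set xs \<subseteq> Ob \<Longrightarrow> monotone_on Ob R R F \<Longrightarrow> successively R (map F xs)"
  unfolding successively_map by (erule successively_mono) (auto dest: monotone_onD)

lemma prism_in_rel_simplices:
  assumes xs: "xs \<in> rel_simplices Ob R n" and "i \<le> n"
    and F: "F ` Ob \<subseteq> Ob" "monotone_on Ob R R F" and G: "G ` Ob \<subseteq> Ob" "monotone_on Ob R R G"
    and FG: "\<forall>x\<in>Ob. R (F x) (G x)"
  shows "prism F G i xs \<in> rel_simplices Ob R (Suc n)"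
proof -
  have len: "length xs = Suc n" and sub: "set xs \<subseteq> Ob" and succ: "successively R xs"
    using xs by (auto simp: rel_simplices_def)
  have "successively R (take (Suc i) xs) \<and> successively R (drop i xs)"
    using succ by (metis append_take_drop_id successively_append_iff)
  moreover have "set (take (Suc i) xs) \<subseteq> Ob" "set (drop i xs) \<subseteq> Ob"
    using sub by (auto dest: in_set_takeD in_set_dropD)
  moreover have "xs ! i \<in> Ob"
    using \<open>i \<le> n\<close> len sub by (auto intro: nth_mem)
  then have "R (last (map F (take (Suc i) xs))) (hd (map G (drop i xs)))"
    using \<open>i \<le> n\<close> len FG by (simp add: last_map hd_map hd_drop_conv_nth take_Suc_conv_app_nth)
  ultimately have "successively R (prism F G i xs)"
    unfolding prism_def using F(2) G(2)
    by (simp add: successively_append_iff successively_map_monotone_on)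
  moreover have "set (prism F G i xs) \<subseteq> Ob"
    using sub F G unfolding prism_def by (auto simp: image_subset_iff dest: in_set_takeD in_set_dropD)
  ultimately show ?thesis
    using len \<open>i \<le> n\<close> by (simp add: rel_simplices_def prism_def)
qed

lemma prism_operator_in_rel_chains:
  assumes "xs \<in> rel_simplices Ob R n"
    and "F ` Ob \<subseteq> Ob" "monotone_on Ob R R F" "G ` Ob \<subseteq> Ob" "monotone_on Ob R R G"
    and "\<forall>x\<in>Ob. R (F x) (G x)"
  shows "prism_operator F G (Suc n) xs \<in> rel_chains Ob R (Suc n)"
proof -
  have "Poly_Mapping.keys (prism_operator F G (Suc n) xs)
      \<subseteq> (\<Union>i<Suc n. Poly_Mapping.keys (signed i (frag_of (prism F G i xs))))"
    unfolding prism_operator_def by (rule keys_sum)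
  also have "\<dots> \<subseteq> rel_simplices Ob R (Suc n)"
    using prism_in_rel_simplices[OF assms(1) _ assms(2-)] by (auto simp: signed_def keys_frag_of)
  finally show ?thesis by (simp add: rel_chains_def)
qed

lemma homologous_maps_if_pointwise:
  assumes F: "F ` Ob \<subseteq> Ob" "monotone_on Ob R R F" and G: "G ` Ob \<subseteq> Ob" "monotone_on Ob R R G"
    and FG: "\<forall>x\<in>Ob. R (F x) (G x)"
  shows "homologous_maps Ob R F G"
  unfolding homologous_maps_def
proof (intro allI ballI)
  fix n z assume z: "z \<in> rel_cycles Ob R n"
  define b where "b = frag_extend (prism_operator F G (Suc n)) z"
  have "b \<in> rel_chains Ob R (Suc n)"
    using z keys_frag_extend[of "prism_operator F G (Suc n)" z]
      prism_operator_in_rel_chains[OF _ F G FG]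
    unfolding b_def rel_cycles_def rel_chains_def by blast
  have "chain_map G z - chain_map F z = frag_extend (\<lambda>xs. frag_of (map G xs) - frag_of (map F xs)) z"
    unfolding chain_map_def by (rule frag_extend_diff_fun)
  also have "\<dots> = frag_extend (\<lambda>xs. frag_extend (simplex_boundary (Suc n)) (prism_operator F G (Suc n) xs)
                       + frag_extend (prism_operator F G n) (simplex_boundary n xs)) z"
    by (rule frag_extend_eq)
       (use z in \<open>auto simp: prism_operator_homotopy rel_cycles_def rel_chains_def rel_simplices_def\<close>)
  also have "\<dots> = chain_boundary (Suc n) b + frag_extend (prism_operator F G n) (chain_boundary n z)"
    unfolding b_def chain_boundary_def using subset_UNIV
    by (induction z rule: frag_induction) (auto simp: frag_extend_diff)
  also have "frag_extend (prism_operator F G n) (chain_boundary n z) = 0"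
    using z by (cases n) (auto simp: rel_cycles_def prism_operator_def intro: frag_extend_eq_0)
  finally show "chain_map G z - chain_map F z \<in> rel_boundaries Ob R n"
    using \<open>b \<in> rel_chains Ob R (Suc n)\<close> by (simp add: rel_boundaries_def)
qed

lemma homologous_maps_zigzag:
  assumes endo: "\<And>k. k \<le> m \<Longrightarrow> Fs k ` Ob \<subseteq> Ob \<and> monotone_on Ob R R (Fs k)"
    and steps: "\<And>k. k < m \<Longrightarrow> (\<forall>x\<in>Ob. R (Fs k x) (Fs (Suc k) x)) \<or> (\<forall>x\<in>Ob. R (Fs (Suc k) x) (Fs k x))"
  shows "homologous_maps Ob R (Fs 0) (Fs m)"
proof -
  have "homologous_maps Ob R (Fs 0) (Fs k)" if "k \<le> m" for k
    using that
  proof (induction k)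
    case 0
    show ?case by (rule homologous_maps_refl)
  next
    case (Suc k)
    have "homologous_maps Ob R (Fs k) (Fs (Suc k))"
      using steps[of k] endo[of k] endo[of "Suc k"] Suc.prems
      by (auto intro: homologous_maps_if_pointwise homologous_maps_sym)
    with Suc show ?case by (auto intro: homologous_maps_trans)
  qed
  then show ?thesis by simp
qed

lemma chain_map_id_on:
  assumes "z \<in> rel_chains Ob R n" "\<And>x. x \<in> Ob \<Longrightarrow> F x = x"
  shows "chain_map F z = z"
proof -
  have "chain_map F z = frag_extend frag_of z"
    unfolding chain_map_def
  proof (rule frag_extend_eq)
    fix xs assume "xs \<in> Poly_Mapping.keys z"
    then have "set xs \<subseteq> Ob" using assms(1) by (auto simp: rel_chains_def rel_simplices_def)
    then show "frag_of (map F xs) = frag_of xs" using assms(2) by (simp add: map_idI subset_iff)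
  qed
  then show ?thesis by (simp flip: frag_expansion)
qed

lemma chain_map_const_on:
  assumes "z \<in> rel_chains Ob R n" "\<And>x. x \<in> Ob \<Longrightarrow> F x = p"
  shows "chain_map F z = frag_cmul (augmentation z) (frag_of (replicate (Suc n) p))"
proof -
  have "chain_map F z = frag_extend (\<lambda>_. frag_of (replicate (Suc n) p)) z"
    unfolding chain_map_def
  proof (rule frag_extend_eq)
    fix xs assume "xs \<in> Poly_Mapping.keys z"
    then have "set xs \<subseteq> Ob" "length xs = Suc n"
      using assms(1) by (auto simp: rel_chains_def rel_simplices_def)
    then have "map F xs = map (\<lambda>_. p) xs"
      using assms(2) by (auto intro: map_cong)
    then show "frag_of (map F xs) = frag_of (replicate (Suc n) p)"
      using \<open>length xs = Suc n\<close> by (metis map_replicate_const)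
  qed
  also have "\<dots> = frag_cmul (augmentation z) (frag_of (replicate (Suc n) p))"
    unfolding frag_extend_def augmentation_def
    by (rule poly_mapping_eqI) (simp add: lookup_sum sum_distrib_right)
  finally show ?thesis .
qed

text \<open>The degenerate \<open>n\<close>-simplex at \<open>p\<close> is a boundary for odd \<open>n\<close>, and for even \<open>n > 0\<close> its
  boundary is the degenerate \<open>(n - 1)\<close>-simplex, so a multiple of it is a cycle only if the
  multiplicity vanishes.\<close>

lemma rel_acyclic_if_homologous_to_point:
  assumes p: "p \<in> Ob" "R p p"
    and hom: "\<And>n z. z \<in> rel_cycles Ob R n \<Longrightarrow>
      z - frag_cmul (augmentation z) (frag_of (replicate (Suc n) p)) \<in> rel_boundaries Ob R n"
  shows "rel_acyclic Ob R"
  unfolding rel_acyclic_def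
proof (intro conjI allI ballI impI)
  show "Ob \<noteq> {}" using p by auto
  fix n z assume z: "z \<in> rel_cycles Ob R n" and aug: "n = 0 \<longrightarrow> augmentation z = 0"
  define pt where "pt k = frag_of (replicate (Suc k) p)" for k
  have "successively R (replicate k p)" for k
    using p(2) by (simp add: successively_conv_nth)
  then have "pt k \<in> rel_chains Ob R k" for k
    using p(1) by (auto simp: pt_def rel_chains_def rel_simplices_def keys_frag_of simp del: replicate_Suc)
  have hom: "z - frag_cmul (augmentation z) (pt n) \<in> rel_boundaries Ob R n"
    unfolding pt_def by (rule hom[OF z])
  consider "n = 0" | "0 < n" "even n" | "odd n" by blast
  then show "z \<in> rel_boundaries Ob R n"
  proof cases
    case 1
    with hom aug show ?thesis by simp
  next
    case 2
    have "chain_boundary n (z - frag_cmul (augmentation z) (pt n)) = 0"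
      using 2(1) hom by (rule chain_boundary_rel_boundaries)
    moreover have "chain_boundary n (pt n) = frag_of (replicate n p)"
      using 2 by (simp add: pt_def chain_boundary_def simplex_boundary_replicate del: replicate_Suc)
    ultimately have "frag_cmul (augmentation z) (frag_of (replicate n p)) = 0"
      using z 2 by (simp add: rel_cycles_def chain_boundary_diff chain_boundary_cmul)
    then show ?thesis using hom by simp
  next
    case 3
    have "pt n = chain_boundary (Suc n) (pt (Suc n))"
      using 3 by (simp add: pt_def chain_boundary_def simplex_boundary_replicate del: replicate_Suc)
    then have "pt n \<in> rel_boundaries Ob R n"
      using \<open>pt (Suc n) \<in> rel_chains Ob R (Suc n)\<close> by (simp add: rel_boundaries_def)
    from rel_boundaries_add[OF hom rel_boundaries_cmul[OF this, of "augmentation z"]] show ?thesis by simp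
  qed
qed

theorem rel_acyclic_if_zigzag_contraction:
  assumes endo: "\<And>k. k \<le> m \<Longrightarrow> Fs k ` Ob \<subseteq> Ob \<and> monotone_on Ob R R (Fs k)"
    and steps: "\<And>k. k < m \<Longrightarrow> (\<forall>x\<in>Ob. R (Fs k x) (Fs (Suc k) x)) \<or> (\<forall>x\<in>Ob. R (Fs (Suc k) x) (Fs k x))"
    and first: "\<And>x. x \<in> Ob \<Longrightarrow> Fs 0 x = x"
    and last: "\<And>x. x \<in> Ob \<Longrightarrow> Fs m x = p"
    and p: "p \<in> Ob" "R p p"
  shows "rel_acyclic Ob R"
proof (rule rel_acyclic_if_homologous_to_point[of p Ob R, OF p])
  fix n z assume z: "z \<in> rel_cycles Ob R n"
  have "chain_map (Fs m) z - chain_map (Fs 0) z \<in> rel_boundaries Ob R n"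
    using homologous_maps_zigzag[of m Fs Ob R, OF endo steps] z by (auto simp: homologous_maps_def)
  then have "frag_cmul (augmentation z) (frag_of (replicate (Suc n) p)) - z \<in> rel_boundaries Ob R n"
    using z chain_map_id_on[of z Ob R n "Fs 0"] chain_map_const_on[of z Ob R n "Fs m" p] first last
    by (simp add: rel_cycles_def)
  then show "z - frag_cmul (augmentation z) (frag_of (replicate (Suc n) p)) \<in> rel_boundaries Ob R n"
    using rel_boundaries_diff[OF zero_in_rel_boundaries] by fastforce
qed

section \<open>Nerves of thin categories\<close>

lemma fst_face:
  assumes "length (fst s) = Suc n" "i \<le> n"
  shows "fst (face cmp n i s) = remove_nth i (fst s)"
  using assms by (simp add: face_def remove_nth_def Let_def drop_Suc butlast_conv_take)

text \<open>In a thin category a simplex of the nerve is determined by its vertices, so the nerve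
  chains are the chains of the relation \<open>arrow\<close>.\<close>

locale thin_category =
  fixes Ob :: "'o set" and Hom :: "'o \<Rightarrow> 'o \<Rightarrow> 'm set" and cmp :: "'m \<Rightarrow> 'm \<Rightarrow> 'm"
  assumes comp_closed:
      "\<lbrakk>x \<in> Ob; y \<in> Ob; z \<in> Ob; f \<in> Hom x y; g \<in> Hom y z\<rbrakk> \<Longrightarrow> cmp g f \<in> Hom x z"
    and thin: "\<lbrakk>x \<in> Ob; y \<in> Ob; f \<in> Hom x y; g \<in> Hom x y\<rbrakk> \<Longrightarrow> f = g"
begin

abbreviation arrow :: "'o \<Rightarrow> 'o \<Rightarrow> bool" where
  "arrow x y \<equiv> Hom x y \<noteq> {}"

lemma inner_face_arrow:
  assumes len: "length xs = Suc n" "length fs = n" and Ob: "set xs \<subseteq> Ob"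
    and fs: "\<And>k. k < n \<Longrightarrow> fs ! k \<in> Hom (xs ! k) (xs ! Suc k)"
    and i: "0 < i" "i < n" and "k < n - 1"
  defines "xs' \<equiv> take i xs @ drop (Suc i) xs"
    and "fs' \<equiv> take (i - 1) fs @ [cmp (fs ! i) (fs ! (i - 1))] @ drop (Suc i) fs"
  shows "fs' ! k \<in> Hom (xs' ! k) (xs' ! Suc k)"
proof -
  consider "k < i - 1" | "k = i - 1" | "i \<le> k" by linarith
  then show ?thesis
  proof cases
    case 1
    then have "Suc k < i" by linarith
    then show ?thesis using 1 i len fs[of k] by (simp add: xs'_def fs'_def nth_append)
  next
    case 2
    have "xs ! k \<in> Ob" if "k \<le> n" for k
      using Ob len that by (auto intro: nth_mem)
    then have "cmp (fs ! i) (fs ! (i - 1)) \<in> Hom (xs ! (i - 1)) (xs ! Suc i)"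
      using i fs[of i] fs[of "i - 1"] by (intro comp_closed) auto
    then show ?thesis using 2 i len by (simp add: xs'_def fs'_def nth_append)
  next
    case 3
    then have "\<not> k < i - 1" by linarith
    with 3 show ?thesis
      using i \<open>k < n - 1\<close> len fs[of "Suc k"] by (simp add: xs'_def fs'_def nth_append)
  qed
qed

lemma face_in_nerve_simplices:
  assumes s: "s \<in> nerve_simplices Ob Hom n" and "0 < n" "i \<le> n"
  shows "face cmp n i s \<in> nerve_simplices Ob Hom (n - 1)"
proof -
  obtain xs fs where s_eq: "s = (xs, fs)" by fastforce
  have len: "length xs = Suc n" "length fs = n" and Ob: "set xs \<subseteq> Ob"
    and fs: "\<And>k. k < n \<Longrightarrow> fs ! k \<in> Hom (xs ! k) (xs ! Suc k)"
    using s by (auto simp: s_eq nerve_simplices_def)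
  consider "i = 0" | "i = n" | "0 < i" "i < n" using \<open>i \<le> n\<close> by linarith
  then show ?thesis
  proof cases
    case 1
    have "set (tl xs) \<subseteq> set xs" by (cases xs) auto
    with 1 show ?thesis
      using len Ob fs \<open>0 < n\<close> by (auto simp: s_eq face_def nerve_simplices_def nth_tl)
  next
    case 2
    then show ?thesis
      using len Ob fs \<open>0 < n\<close>
      by (auto simp: s_eq face_def nerve_simplices_def nth_butlast dest: in_set_butlastD)
  next
    case 3
    have "set (take i xs @ drop (Suc i) xs) \<subseteq> Ob"
      using Ob by (auto dest: in_set_takeD in_set_dropD)
    with 3 show ?thesis
      using len inner_face_arrow[OF len Ob fs 3]
      by (simp add: s_eq face_def Let_def nerve_simplices_def)
  qed
qed

definition some_arrow :: "'o \<Rightarrow> 'o \<Rightarrow> 'm" where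
  "some_arrow x y = (SOME f. f \<in> Hom x y)"

definition nerve_simplex :: "'o list \<Rightarrow> 'o list \<times> 'm list" where
  "nerve_simplex xs = (xs, map2 some_arrow xs (tl xs))"

lemma fst_nerve_simplex [simp]: "fst (nerve_simplex xs) = xs"
  by (simp add: nerve_simplex_def)

lemma nerve_simplex_inject [simp]: "nerve_simplex xs = nerve_simplex ys \<longleftrightarrow> xs = ys"
  by (metis fst_nerve_simplex)

lemma nerve_simplex_in_nerve_simplices:
  assumes "xs \<in> rel_simplices Ob arrow n"
  shows "nerve_simplex xs \<in> nerve_simplices Ob Hom n"
proof -
  have "some_arrow (xs ! k) (xs ! Suc k) \<in> Hom (xs ! k) (xs ! Suc k)" if "k < n" for k
    using assms that successively_nth[of arrow xs k]
    unfolding some_arrow_def rel_simplices_def by (auto intro: someI)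
  then show ?thesis
    using assms by (simp add: nerve_simplices_def nerve_simplex_def rel_simplices_def nth_tl)
qed

lemma fst_in_rel_simplices:
  assumes "s \<in> nerve_simplices Ob Hom n"
  shows "fst s \<in> rel_simplices Ob arrow n"
  using assms unfolding nerve_simplices_def rel_simplices_def successively_conv_nth by auto

lemma nerve_simplex_fst:
  assumes s: "s \<in> nerve_simplices Ob Hom n"
  shows "nerve_simplex (fst s) = s"
proof -
  obtain xs fs where s_eq: "s = (xs, fs)" by fastforce
  have xs: "xs \<in> rel_simplices Ob arrow n"
    using fst_in_rel_simplices[OF s] by (simp add: s_eq)
  have "map2 some_arrow xs (tl xs) = fs"
  proof (rule nth_equalityI)
    show "length (map2 some_arrow xs (tl xs)) = length fs"
      using s by (simp add: s_eq nerve_simplices_def)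
    fix k assume "k < length (map2 some_arrow xs (tl xs))"
    then have "k < n" using xs by (simp add: rel_simplices_def)
    then have "map2 some_arrow xs (tl xs) ! k \<in> Hom (xs ! k) (xs ! Suc k)"
      "fs ! k \<in> Hom (xs ! k) (xs ! Suc k)" "xs ! k \<in> Ob" "xs ! Suc k \<in> Ob"
      using s nerve_simplex_in_nerve_simplices[OF xs] xs
      by (auto simp: s_eq nerve_simplices_def rel_simplices_def nerve_simplex_def)
    then show "map2 some_arrow xs (tl xs) ! k = fs ! k"
      by (auto simp: nerve_simplex_def intro: thin)
  qed
  then show ?thesis by (simp add: s_eq nerve_simplex_def)
qed

lemma face_nerve_simplex:
  assumes xs: "xs \<in> rel_simplices Ob arrow n" and "0 < n" "i \<le> n"
  shows "face cmp n i (nerve_simplex xs) = nerve_simplex (remove_nth i xs)"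
proof -
  have "face cmp n i (nerve_simplex xs) \<in> nerve_simplices Ob Hom (n - 1)"
    using assms by (intro face_in_nerve_simplices nerve_simplex_in_nerve_simplices)
  from nerve_simplex_fst[OF this] show ?thesis
    using xs \<open>i \<le> n\<close> by (simp add: fst_face rel_simplices_def)
qed

definition chain_of_frag :: "('o list \<Rightarrow>\<^sub>0 int) \<Rightarrow> 'o list \<times> 'm list \<Rightarrow> int" where
  "chain_of_frag z s = (if s = nerve_simplex (fst s) then Poly_Mapping.lookup z (fst s) else 0)"

lemma chain_of_frag_nerve_simplex [simp]: "chain_of_frag z (nerve_simplex xs) = Poly_Mapping.lookup z xs"
  by (simp add: chain_of_frag_def)

lemma support_chain_of_frag: "{s. chain_of_frag z s \<noteq> 0} = nerve_simplex ` Poly_Mapping.keys z"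
  by (auto simp: chain_of_frag_def in_keys_iff image_iff split: if_splits)

lemma chain_of_frag_inject: "chain_of_frag z = chain_of_frag z' \<Longrightarrow> z = z'"
  by (rule poly_mapping_eqI) (metis chain_of_frag_nerve_simplex)

lemma is_chain_chain_of_frag:
  "z \<in> rel_chains Ob arrow n \<Longrightarrow> is_chain Ob Hom n (chain_of_frag z)"
  unfolding is_chain_def support_chain_of_frag rel_chains_def
  using nerve_simplex_in_nerve_simplices by auto

lemma is_chain_imp_chain_of_frag:
  assumes c: "is_chain Ob Hom n c"
  obtains z where "z \<in> rel_chains Ob arrow n" "c = chain_of_frag z"
proof
  define z where "z = Abs_poly_mapping (\<lambda>xs. c (nerve_simplex xs))"
  have "finite {xs. c (nerve_simplex xs) \<noteq> 0}"
    using c finite_vimageI[of "{s. c s \<noteq> 0}" nerve_simplex]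
    by (simp add: is_chain_def inj_def vimage_def)
  then have lookup_z: "Poly_Mapping.lookup z = (\<lambda>xs. c (nerve_simplex xs))"
    by (simp add: z_def Abs_poly_mapping_inverse)
  have support: "c s \<noteq> 0 \<Longrightarrow> s \<in> nerve_simplices Ob Hom n" for s
    using c by (auto simp: is_chain_def)
  show "z \<in> rel_chains Ob arrow n"
    unfolding rel_chains_def mem_Collect_eq
  proof
    fix xs assume "xs \<in> Poly_Mapping.keys z"
    then have "nerve_simplex xs \<in> nerve_simplices Ob Hom n"
      using support by (simp add: in_keys_iff lookup_z)
    from fst_in_rel_simplices[OF this] show "xs \<in> rel_simplices Ob arrow n" by simp
  qed
  show "c = chain_of_frag z"
  proof
    fix s
    show "c s = chain_of_frag z s"
    proof (cases "c s = 0")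
      case True
      then show ?thesis by (metis chain_of_frag_def lookup_z)
    next
      case False
      then have "nerve_simplex (fst s) = s" using support nerve_simplex_fst by blast
      then show ?thesis by (metis chain_of_frag_nerve_simplex lookup_z)
    qed
  qed
qed

lemma sum_chain_of_frag: "(\<Sum>s\<in>{s. chain_of_frag z s \<noteq> 0}. chain_of_frag z s) = augmentation z"
  unfolding support_chain_of_frag augmentation_def
  by (subst sum.reindex) (auto simp: inj_on_def)

lemma bdry_chain_of_frag:
  assumes z: "z \<in> rel_chains Ob arrow n" and "0 < n"
  shows "bdry cmp n (chain_of_frag z) = chain_of_frag (chain_boundary n z)"
proof
  fix t
  have "bdry cmp n (chain_of_frag z) t =
      (\<Sum>xs\<in>Poly_Mapping.keys z. \<Sum>i\<le>n. if face cmp n i (nerve_simplex xs) = t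
         then (-1) ^ i * Poly_Mapping.lookup z xs else 0)"
    unfolding bdry_def support_chain_of_frag by (simp add: sum.reindex inj_on_def cong: if_cong)
  also have "\<dots> = (\<Sum>xs\<in>Poly_Mapping.keys z. \<Sum>i\<le>n. if nerve_simplex (remove_nth i xs) = t
         then (-1) ^ i * Poly_Mapping.lookup z xs else 0)"
    using z \<open>0 < n\<close> by (intro sum.cong refl) (auto simp: face_nerve_simplex rel_chains_def)
  also have "\<dots> = chain_of_frag (chain_boundary n z) t"
  proof (cases "t = nerve_simplex (fst t)")
    case False
    then have "nerve_simplex ys \<noteq> t" for ys by auto
    with False show ?thesis by (simp add: chain_of_frag_def)
  qed (auto simp: chain_of_frag_def chain_boundary_def simplex_boundary_def frag_extend_def
        signed_def lookup_sum sum_distrib_left if_distrib mult.commute intro!: sum.cong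
        cong: if_cong)
  finally show "bdry cmp n (chain_of_frag z) t = chain_of_frag (chain_boundary n z) t" .
qed

theorem connected_acyclic_if_rel_acyclic:
  assumes "rel_acyclic Ob arrow"
  shows "connected_acyclic Ob Hom cmp"
  unfolding connected_acyclic_def
proof (intro conjI allI impI)
  show "Ob \<noteq> {}" using assms by (simp add: rel_acyclic_def)
next
  fix c assume "is_chain Ob Hom 0 c \<and> (\<Sum>s\<in>{s. c s \<noteq> 0}. c s) = 0"
  then obtain z where z: "z \<in> rel_chains Ob arrow 0" "c = chain_of_frag z" "augmentation z = 0"
    by (metis is_chain_imp_chain_of_frag sum_chain_of_frag)
  then obtain b where "b \<in> rel_chains Ob arrow 1" "chain_boundary 1 b = z"
    using assms by (auto simp: rel_acyclic_def rel_cycles_def rel_boundaries_def)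
  then show "\<exists>b. is_chain Ob Hom 1 b \<and> bdry cmp 1 b = c"
    using z by (metis is_chain_chain_of_frag bdry_chain_of_frag zero_less_one)
next
  fix n c assume n: "1 \<le> n" and "is_chain Ob Hom n c \<and> bdry cmp n c = (\<lambda>_. 0)"
  then obtain z where z: "z \<in> rel_chains Ob arrow n" "c = chain_of_frag z" "bdry cmp n c = (\<lambda>_. 0)"
    by (metis is_chain_imp_chain_of_frag)
  have "chain_of_frag (chain_boundary n z) = chain_of_frag 0"
    using z n by (auto simp: bdry_chain_of_frag chain_of_frag_def)
  then have "z \<in> rel_cycles Ob arrow n"
    using z by (auto simp: rel_cycles_def dest: chain_of_frag_inject)
  then have "z \<in> rel_boundaries Ob arrow n"
    using assms n by (simp add: rel_acyclic_def)
  then obtain b where "b \<in> rel_chains Ob arrow (Suc n)" "chain_boundary (Suc n) b = z"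
    by (auto simp: rel_boundaries_def)
  then show "\<exists>b. is_chain Ob Hom (Suc n) b \<and> bdry cmp (Suc n) b = c"
    using z by (metis is_chain_chain_of_frag bdry_chain_of_frag zero_less_Suc)
qed

end

section \<open>Traces and the projection lemma\<close>

definition proj_pair :: "'a \<Rightarrow> 'a \<Rightarrow> 'a list \<Rightarrow> 'a list" where
  "proj_pair a b = filter (\<lambda>x. x = a \<or> x = b)"

lemma proj_pair_Nil [simp]: "proj_pair a b [] = []"
  by (simp add: proj_pair_def)

lemma proj_pair_Cons: "proj_pair a b (x # xs) = (if x = a \<or> x = b then x # proj_pair a b xs else proj_pair a b xs)"
  by (simp add: proj_pair_def)

lemma proj_pair_append [simp]: "proj_pair a b (xs @ ys) = proj_pair a b xs @ proj_pair a b ys"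
  by (simp add: proj_pair_def)

lemma count_list_proj_pair: "count_list xs a = length (proj_pair a a xs)"
  by (induction xs) (auto simp: proj_pair_def)

definition trace_count :: "'a list set \<Rightarrow> 'a \<Rightarrow> nat" where
  "trace_count t = count_list (SOME v. v \<in> t)"

locale independence_relation =
  fixes I :: "('a \<times> 'a) set"
  assumes irrefl: "irrefl I" and sym: "sym I"
begin

lemma not_in_I_refl [simp]: "(a, a) \<notin> I"
  using irrefl by (simp add: irrefl_def)

lemma I_sym: "(a, b) \<in> I \<Longrightarrow> (b, a) \<in> I"
  using sym by (simp add: sym_def)

lemma teq_refl [simp]: "teq I u u"
  by (simp add: teq_def)

lemma teq_trans: "teq I u v \<Longrightarrow> teq I v x \<Longrightarrow> teq I u x"
  unfolding teq_def by simp

lemma swap_step_sym: "swap_step I u v \<Longrightarrow> swap_step I v u"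
  by (auto elim!: swap_step.cases intro: swap_step.intros I_sym)

lemma teq_sym: "teq I u v \<Longrightarrow> teq I v u"
  unfolding teq_def
  by (induction rule: rtranclp_induct) (auto intro: converse_rtranclp_into_rtranclp swap_step_sym)

lemma teq_context:
  assumes "teq I u v"
  shows "teq I (p @ u @ s) (p @ v @ s)"
proof -
  have step: "swap_step I (p @ x @ s) (p @ y @ s)" if "swap_step I x y" for x y
    using that by cases (metis append.assoc swap_step.intros)
  from assms show ?thesis
    unfolding teq_def by (induction rule: rtranclp_induct) (auto intro: rtranclp.rtrancl_into_rtrancl step)
qed

lemma teq_move_to_front:
  assumes "\<forall>y\<in>set ys. (x, y) \<in> I"
  shows "teq I (ys @ x # zs) (x # ys @ zs)"
  using assms
proof (induction ys arbitrary: zs rule: rev_induct)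
  case (snoc y ys)
  have "swap_step I (ys @ [y, x] @ zs) (ys @ [x, y] @ zs)"
    using snoc.prems I_sym by (intro swap_step.intros) auto
  then have "teq I (ys @ y # x # zs) (ys @ x # y # zs)"
    by (simp add: teq_def)
  with snoc show ?case by (auto intro: teq_trans)
qed simp

lemma teq_proj_pair:
  assumes "teq I u v" "(a, b) \<notin> I"
  shows "proj_pair a b u = proj_pair a b v"
proof -
  have "proj_pair a b u = proj_pair a b v" if "swap_step I u v" for u v
    using that
  proof cases
    case (1 c d p s)
    then have "\<not> ((c = a \<or> c = b) \<and> (d = a \<or> d = b))"
      using assms(2) I_sym by (metis not_in_I_refl)
    then show ?thesis using 1 by (auto simp: proj_pair_def)
  qed
  with assms(1) show ?thesis
    unfolding teq_def by (induction rule: rtranclp_induct) auto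
qed

lemma independent_before_first_occurrence:
  assumes "\<forall>a b. (a, b) \<notin> I \<longrightarrow> proj_pair a b (x # u) = proj_pair a b (v1 @ x # v2)" "x \<notin> set v1"
  shows "\<forall>y\<in>set v1. (x, y) \<in> I"
proof (rule ballI, rule ccontr)
  fix y assume "y \<in> set v1" "(x, y) \<notin> I"
  then have "proj_pair x y v1 \<noteq> []" by (auto simp: proj_pair_def filter_empty_conv)
  then obtain z zs where z: "proj_pair x y v1 = z # zs" by (cases "proj_pair x y v1") auto
  then have "z \<in> set (proj_pair x y v1)" by simp
  then have "z = y" "x \<noteq> y"
    using \<open>x \<notin> set v1\<close> \<open>y \<in> set v1\<close> by (auto simp: proj_pair_def)
  moreover have "proj_pair x y (x # u) = proj_pair x y (v1 @ x # v2)"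
    using assms(1) \<open>(x, y) \<notin> I\<close> by blast
  ultimately show False using z by (simp add: proj_pair_Cons)
qed

text \<open>The converse is the projection lemma of trace theory.\<close>

lemma teq_if_proj_pair:
  assumes "\<forall>a b. (a, b) \<notin> I \<longrightarrow> proj_pair a b u = proj_pair a b v"
  shows "teq I u v"
  using assms
proof (induction u arbitrary: v)
  case Nil
  have "proj_pair y y v = []" for y
    using Nil.prems[rule_format, of y y] by simp
  from this[of "hd v"] have "v = []"
    by (cases v) (auto simp: proj_pair_Cons)
  then show ?case by simp
next
  case (Cons x u)
  have "proj_pair x x v \<noteq> []"
    using Cons.prems[rule_format, of x x] by (auto simp: proj_pair_Cons)
  then have "x \<in> set v" by (auto simp: proj_pair_def filter_empty_conv)
  then obtain v1 v2 where v: "v = v1 @ x # v2" and "x \<notin> set v1" by (meson split_list_first)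
  have indep: "\<forall>y\<in>set v1. (x, y) \<in> I"
    using Cons.prems \<open>x \<notin> set v1\<close> unfolding v by (rule independent_before_first_occurrence)
  have moved: "teq I v (x # v1 @ v2)"
    using teq_move_to_front[OF indep] v by simp
  have "proj_pair a b u = proj_pair a b (v1 @ v2)" if "(a, b) \<notin> I" for a b
  proof -
    have "proj_pair a b (x # u) = proj_pair a b (x # v1 @ v2)"
      using Cons.prems that teq_proj_pair[OF moved that] by simp
    then show ?thesis by (simp add: proj_pair_Cons split: if_splits)
  qed
  then have "teq I u (v1 @ v2)" by (intro Cons.IH) blast
  then have "teq I (x # u) (x # v1 @ v2)" using teq_context[of u "v1 @ v2" "[x]" "[]"] by simp
  then show ?case using teq_sym[OF moved] by (rule teq_trans)
qed

lemma teq_iff_proj_pair: "teq I u v \<longleftrightarrow> (\<forall>a b. (a, b) \<notin> I \<longrightarrow> proj_pair a b u = proj_pair a b v)"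
  using teq_proj_pair teq_if_proj_pair by blast

lemma teq_count_list: "teq I u v \<Longrightarrow> count_list u a = count_list v a"
  using teq_proj_pair[of u v a a] by (simp add: count_list_proj_pair)

lemma teq_set:
  assumes "teq I u v"
  shows "set u = set v"
proof (rule set_eqI)
  fix x
  show "x \<in> set u \<longleftrightarrow> x \<in> set v"
    using teq_count_list[OF assms, of x] count_list_0_iff[of u x] count_list_0_iff[of v x] by auto
qed

lemma teq_cancel_left: "teq I (p @ u) (p @ v) \<Longrightarrow> teq I u v"
  by (simp add: teq_iff_proj_pair)

lemma teq_cancel_right: "teq I (u @ s) (v @ s) \<Longrightarrow> teq I u v"
  by (simp add: teq_iff_proj_pair)

lemma teq_append: "teq I u u' \<Longrightarrow> teq I v v' \<Longrightarrow> teq I (u @ v) (u' @ v')"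
  by (simp add: teq_iff_proj_pair)

lemma in_trace: "x \<in> trace I u \<longleftrightarrow> teq I u x"
  by (simp add: trace_def)

lemma trace_eq_iff: "trace I u = trace I v \<longleftrightarrow> teq I u v"
proof
  assume "trace I u = trace I v"
  then have "v \<in> trace I u" by (simp add: in_trace)
  then show "teq I u v" by (simp add: in_trace)
next
  assume "teq I u v"
  then show "trace I u = trace I v"
    unfolding trace_def using teq_sym teq_trans by blast
qed

lemma tmult_trace: "tmult I (trace I u) (trace I v) = trace I (u @ v)"
proof -
  have "trace I (u' @ v') = trace I (u @ v)" if "u' \<in> trace I u" "v' \<in> trace I v" for u' v'
    using teq_sym[OF teq_append[OF that[unfolded in_trace]]] by (simp add: trace_eq_iff)
  moreover have "u \<in> trace I u" "v \<in> trace I v" by (simp_all add: in_trace)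
  ultimately show ?thesis unfolding tmult_def by blast
qed

lemma trace_count_trace [simp]: "trace_count (trace I v) = count_list v"
proof -
  have "(SOME v'. v' \<in> trace I v) \<in> trace I v"
    by (rule someI[of _ v]) (simp add: in_trace)
  then show ?thesis
    unfolding trace_count_def using teq_count_list by (auto simp: in_trace)
qed

end

section \<open>Ideals of occurrences\<close>

text \<open>\<open>occs w\<close> tags every letter of \<open>w\<close> with the number of its earlier occurrences, so that
  \<open>occs_below (count_list u)\<close> is the set of occurrences in a prefix \<open>u\<close> of \<open>w\<close>.\<close>

fun occs_from :: "('a \<Rightarrow> nat) \<Rightarrow> 'a list \<Rightarrow> ('a \<times> nat) list" where
  "occs_from c [] = []"
| "occs_from c (x # xs) = (x, c x) # occs_from (c(x := Suc (c x))) xs"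

definition occs :: "'a list \<Rightarrow> ('a \<times> nat) list" where
  "occs w = occs_from (\<lambda>_. 0) w"

lemma map_fst_occs_from [simp]: "map fst (occs_from c xs) = xs"
  by (induction xs arbitrary: c) auto

lemma length_occs_from [simp]: "length (occs_from c xs) = length xs"
  by (induction xs arbitrary: c) auto

lemma occs_from_append:
  "occs_from c (xs @ ys) = occs_from c xs @ occs_from (\<lambda>a. c a + count_list xs a) ys"
proof (induction xs arbitrary: c)
  case (Cons x xs)
  have "(\<lambda>a. (c(x := Suc (c x))) a + count_list xs a) = (\<lambda>a. c a + count_list (x # xs) a)"
    by auto
  then show ?case by (simp only: append_Cons occs_from.simps Cons.IH)
qed simp

lemma occs_append: "occs (xs @ ys) = occs xs @ occs_from (count_list xs) ys"
  by (simp add: occs_def occs_from_append)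

lemma set_occs_from:
  "q \<in> set (occs_from c xs) \<Longrightarrow> fst q \<in> set xs \<and> c (fst q) \<le> snd q \<and> snd q < c (fst q) + count_list xs (fst q)"
  by (induction xs arbitrary: c) (fastforce split: if_splits)+

lemma occs_from_cong: "\<forall>y\<in>set xs. c y = c' y \<Longrightarrow> occs_from c xs = occs_from c' xs"
  by (induction xs arbitrary: c c') auto

lemma filter_occs_from: "filter (\<lambda>q. P (fst q)) (occs_from c xs) = occs_from c (filter P xs)"
proof (induction xs arbitrary: c)
  case (Cons x xs)
  then show ?case by (auto intro: occs_from_cong)
qed simp

lemma take_occs: "take j (occs w) = occs (take j w)"
proof -
  have "take j (occs_from c xs) = occs_from c (take j xs)" for c xs
    by (induction xs arbitrary: j c) (auto simp: take_Cons split: nat.split)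
  then show ?thesis by (simp add: occs_def)
qed

definition occs_below :: "('a \<Rightarrow> nat) \<Rightarrow> ('a \<times> nat) set" where
  "occs_below \<kappa> = {q. snd q < \<kappa> (fst q)}"

lemma occs_below_mono: "(\<And>a. \<kappa> a \<le> \<kappa>' a) \<Longrightarrow> occs_below \<kappa> \<subseteq> occs_below \<kappa>'"
  by (auto simp: occs_below_def intro: less_le_trans)

lemma occs_append_below:
  assumes "\<forall>x\<in>set u \<union> set r. \<kappa> x = count_list u x"
  shows "set (occs u) \<subseteq> occs_below \<kappa>" "set (occs_from (count_list u) r) \<inter> occs_below \<kappa> = {}"
  using assms set_occs_from[of _ "\<lambda>_. 0" u] set_occs_from[of _ "count_list u" r]
  by (fastforce simp: occs_def occs_below_def)+

definition subword :: "'a list \<Rightarrow> ('a \<times> nat) set \<Rightarrow> 'a list" where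
  "subword w S = map fst (filter (\<lambda>q. q \<in> S) (occs w))"

lemma subword_UNIV [simp]: "subword w UNIV = w"
  by (simp add: subword_def occs_def)

lemma set_subword: "set (subword w S) = fst ` (S \<inter> set (occs w))"
  by (auto simp: subword_def)

lemma set_subword_subset: "set (subword w S) \<subseteq> set w"
  unfolding subword_def occs_def using map_fst_occs_from[of "\<lambda>_. 0" w]
  by (metis filter_is_subset image_mono list.set_map)

lemma subword_cong: "(\<And>q. q \<in> set (occs w) \<Longrightarrow> q \<in> S \<longleftrightarrow> q \<in> S') \<Longrightarrow> subword w S = subword w S'"
  unfolding subword_def by (metis (mono_tags, lifting) filter_cong)

lemma occs_proj_pair: "occs (proj_pair a b w) = filter (\<lambda>q. fst q = a \<or> fst q = b) (occs w)"
  unfolding occs_def proj_pair_def using filter_occs_from[of "\<lambda>x. x = a \<or> x = b" "\<lambda>_. 0" w] by simp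

lemma proj_pair_subword:
  "proj_pair a b (subword w S) = map fst (filter (\<lambda>q. q \<in> S) (occs (proj_pair a b w)))"
  unfolding subword_def occs_proj_pair by (simp add: proj_pair_def filter_map o_def conj_commute)

definition cuts_prefix :: "'b list \<Rightarrow> 'b set \<Rightarrow> bool" where
  "cuts_prefix Q S \<longleftrightarrow> (\<exists>m\<le>length Q. \<forall>i<length Q. Q ! i \<in> S \<longleftrightarrow> i < m)"

text \<open>An ideal of occurrences of \<open>w\<close> is downward closed in the dependence order of
  occurrences; it suffices to test this on the occurrences of each dependent pair.\<close>

definition occ_ideal :: "('a \<times> 'a) set \<Rightarrow> 'a list \<Rightarrow> ('a \<times> nat) set \<Rightarrow> bool" where
  "occ_ideal I w S \<longleftrightarrow> (\<forall>a b. (a, b) \<notin> I \<longrightarrow> cuts_prefix (occs (proj_pair a b w)) S)"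

lemma cuts_prefix_Int:
  assumes "cuts_prefix Q A" "cuts_prefix Q B"
  shows "cuts_prefix Q (A \<inter> B)"
proof -
  obtain mA mB where "mA \<le> length Q" "\<forall>i<length Q. Q ! i \<in> A \<longleftrightarrow> i < mA"
    "\<forall>i<length Q. Q ! i \<in> B \<longleftrightarrow> i < mB"
    using assms unfolding cuts_prefix_def by blast
  then show ?thesis
    unfolding cuts_prefix_def by (intro exI[of _ "min mA mB"]) auto
qed

lemma occ_ideal_Int: "occ_ideal I w A \<Longrightarrow> occ_ideal I w B \<Longrightarrow> occ_ideal I w (A \<inter> B)"
  by (simp add: occ_ideal_def cuts_prefix_Int)

lemma occ_ideal_UNIV: "occ_ideal I w UNIV"
  by (auto simp: occ_ideal_def cuts_prefix_def)

lemma occ_ideal_empty: "occ_ideal I w {}"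
  by (auto simp: occ_ideal_def cuts_prefix_def)

lemma cuts_prefix_mono:
  assumes "\<forall>i<length Q. Q ! i \<in> A \<longleftrightarrow> i < m" "\<forall>i<length Q. Q ! i \<in> B \<longleftrightarrow> i < k"
    and "m \<le> length Q" "A \<subseteq> B"
  shows "m \<le> k"
proof (rule ccontr)
  assume "\<not> m \<le> k"
  then have "k < length Q" "Q ! k \<in> A" using assms(1,3) by auto
  then show False using assms(2,4) by auto
qed

lemma drop_take_append:
  assumes "lo \<le> mid" "mid \<le> hi" "hi \<le> length Q"
  shows "drop lo (take hi Q) = drop lo (take mid Q) @ drop mid (take hi Q)"
proof -
  have "take hi Q = take mid Q @ drop mid (take hi Q)"
    using assms by (metis append_take_drop_id min.absorb1 take_take)
  moreover have "length (take mid Q) = mid" using assms by simp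
  ultimately show ?thesis using assms(1) by (metis drop_append diff_is_0_eq drop0)
qed

lemma nth_filter_length_take:
  assumes "k < length xs" "P (xs ! k)"
  shows "filter P xs ! length (filter P (take k xs)) = xs ! k"
proof -
  have "filter P xs = filter P (take k xs @ drop k xs)" by simp
  also have "drop k xs = xs ! k # drop (Suc k) xs"
    using assms(1) by (rule Cons_nth_drop_Suc[symmetric])
  finally show ?thesis
    using assms(2) by (simp add: nth_append)
qed

lemma length_filter_take_less:
  assumes "i < j" "j \<le> length xs" "P (xs ! i)"
  shows "length (filter P (take i xs)) < length (filter P (take j xs))"
proof -
  have "take j xs = take i (take j xs) @ drop i (take j xs)"
    by (rule append_take_drop_id[symmetric])
  also have "take i (take j xs) = take i xs"
    using assms(1) by (simp add: min_def)
  also have "drop i (take j xs) = take j xs ! i # drop (Suc i) (take j xs)"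
    using assms by (intro Cons_nth_drop_Suc[symmetric]) simp
  also have "take j xs ! i = xs ! i"
    using assms by simp
  finally obtain D where "take j xs = take i xs @ xs ! i # D" by blast
  then show ?thesis
    using assms(3) by simp
qed

lemma filter_interval:
  assumes "\<forall>i<length Q. P (Q ! i) \<longleftrightarrow> lo \<le> i \<and> i < hi" "lo \<le> hi" "hi \<le> length Q"
  shows "filter P Q = drop lo (take hi Q)"
proof -
  have Q: "Q = take lo Q @ drop lo (take hi Q) @ drop hi Q"
    using assms(2,3) by (metis append.assoc append_take_drop_id drop_take le_add_diff_inverse take_add)
  have "filter P (take lo Q) = []" "filter P (drop hi Q) = []"
    using assms by (auto simp: filter_empty_conv in_set_conv_nth)
  moreover have "filter P (drop lo (take hi Q)) = drop lo (take hi Q)"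
    using assms by (auto simp: filter_id_conv in_set_conv_nth)
  ultimately show ?thesis by (subst Q) simp
qed

context independence_relation
begin

lemma proj_pair_occs_prefix:
  assumes "teq I (u @ r) w" "(a, b) \<notin> I"
  defines "A \<equiv> occs (proj_pair a b u)" and "B \<equiv> occs_from (count_list (proj_pair a b u)) (proj_pair a b r)"
  shows "occs (proj_pair a b w) = A @ B"
    and "set A \<subseteq> occs_below (count_list u)" "set B \<inter> occs_below (count_list u) = {}"
proof -
  have "proj_pair a b w = proj_pair a b u @ proj_pair a b r"
    using teq_proj_pair[OF assms(1,2)] by simp
  then show "occs (proj_pair a b w) = A @ B"
    by (simp add: A_def B_def occs_append)
  have "count_list (proj_pair a b u) x = count_list u x" if "x = a \<or> x = b" for x
    using that by (induction u) (auto simp: proj_pair_Cons)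
  then have "\<forall>x\<in>set (proj_pair a b u) \<union> set (proj_pair a b r). count_list u x = count_list (proj_pair a b u) x"
    by (auto simp: proj_pair_def)
  from occs_append_below[OF this]
  show "set A \<subseteq> occs_below (count_list u)" "set B \<inter> occs_below (count_list u) = {}"
    by (simp_all add: A_def B_def)
qed

lemma subword_prefix:
  assumes "teq I (u @ r) w"
  shows "teq I (subword w (occs_below (count_list u))) u" "teq I (subword w (- occs_below (count_list u))) r"
proof -
  have "proj_pair a b (subword w (occs_below (count_list u))) = proj_pair a b u \<and>
        proj_pair a b (subword w (- occs_below (count_list u))) = proj_pair a b r" if "(a, b) \<notin> I" for a b
  proof -
    note split = proj_pair_occs_prefix[OF assms that]
    define A where "A = occs (proj_pair a b u)"
    define B where "B = occs_from (count_list (proj_pair a b u)) (proj_pair a b r)"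
    have "filter (\<lambda>q. q \<in> occs_below (count_list u)) A = A" "filter (\<lambda>q. q \<notin> occs_below (count_list u)) A = []"
      using split(2) by (auto simp: A_def filter_id_conv filter_empty_conv)
    moreover have "filter (\<lambda>q. q \<in> occs_below (count_list u)) B = []" "filter (\<lambda>q. q \<notin> occs_below (count_list u)) B = B"
      using split(3) by (auto simp: B_def filter_id_conv filter_empty_conv)
    ultimately show ?thesis
      unfolding proj_pair_subword split(1) A_def[symmetric] B_def[symmetric] by (simp add: A_def B_def occs_def)
  qed
  then show "teq I (subword w (occs_below (count_list u))) u" "teq I (subword w (- occs_below (count_list u))) r"
    by (simp_all add: teq_iff_proj_pair)
qed

lemma occ_ideal_prefix:
  assumes "teq I (u @ r) w"
  shows "occ_ideal I w (occs_below (count_list u))"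
  unfolding occ_ideal_def cuts_prefix_def
proof (intro allI impI)
  fix a b assume "(a, b) \<notin> I"
  note split = proj_pair_occs_prefix[OF assms this]
  define A where "A = occs (proj_pair a b u)"
  define B where "B = occs_from (count_list (proj_pair a b u)) (proj_pair a b r)"
  have "(A @ B) ! i \<in> occs_below (count_list u) \<longleftrightarrow> i < length A" if "i < length (A @ B)" for i
  proof (cases "i < length A")
    case True
    then show ?thesis using split(2) nth_mem[OF True] by (auto simp: A_def nth_append)
  next
    case False
    then have "i - length A < length B" using that by simp
    from nth_mem[OF this] show ?thesis using split(3) False by (auto simp: B_def nth_append)
  qed
  then show "\<exists>m\<le>length (occs (proj_pair a b w)). \<forall>i<length (occs (proj_pair a b w)).
      occs (proj_pair a b w) ! i \<in> occs_below (count_list u) \<longleftrightarrow> i < m"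
    unfolding split(1) A_def[symmetric] B_def[symmetric] by (intro exI[of _ "length A"]) auto
qed

lemma subword_diff_split:
  assumes "occ_ideal I w A" "occ_ideal I w B" "occ_ideal I w C" "A \<subseteq> B" "B \<subseteq> C"
  shows "teq I (subword w (C - A)) (subword w (B - A) @ subword w (C - B))"
  unfolding teq_iff_proj_pair
proof (intro allI impI)
  fix a b assume ab: "(a, b) \<notin> I"
  define Q where "Q = occs (proj_pair a b w)"
  obtain mA where A: "mA \<le> length Q" "\<forall>i<length Q. Q ! i \<in> A \<longleftrightarrow> i < mA"
    using assms(1) ab unfolding occ_ideal_def cuts_prefix_def Q_def by blast
  obtain mB where B: "mB \<le> length Q" "\<forall>i<length Q. Q ! i \<in> B \<longleftrightarrow> i < mB"
    using assms(2) ab unfolding occ_ideal_def cuts_prefix_def Q_def by blast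
  obtain mC where C: "mC \<le> length Q" "\<forall>i<length Q. Q ! i \<in> C \<longleftrightarrow> i < mC"
    using assms(3) ab unfolding occ_ideal_def cuts_prefix_def Q_def by blast
  have "mA \<le> mB" "mB \<le> mC"
    using cuts_prefix_mono[OF A(2) B(2) A(1) assms(4)] cuts_prefix_mono[OF B(2) C(2) B(1) assms(5)] .
  have "filter (\<lambda>q. q \<in> C - A) Q = drop mA (take mC Q)"
    using A C \<open>mA \<le> mB\<close> \<open>mB \<le> mC\<close> by (intro filter_interval) auto
  also have "\<dots> = drop mA (take mB Q) @ drop mB (take mC Q)"
    using \<open>mA \<le> mB\<close> \<open>mB \<le> mC\<close> C(1) by (rule drop_take_append)
  also have "drop mA (take mB Q) = filter (\<lambda>q. q \<in> B - A) Q"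
    using A B \<open>mA \<le> mB\<close> by (intro filter_interval[symmetric]) auto
  also have "drop mB (take mC Q) = filter (\<lambda>q. q \<in> C - B) Q"
    using B C \<open>mB \<le> mC\<close> by (intro filter_interval[symmetric]) auto
  finally have "filter (\<lambda>q. q \<in> C - A) Q = filter (\<lambda>q. q \<in> B - A) Q @ filter (\<lambda>q. q \<in> C - B) Q" .
  then show "proj_pair a b (subword w (C - A)) = proj_pair a b (subword w (B - A) @ subword w (C - B))"
    by (simp add: proj_pair_subword flip: Q_def)
qed

end

section \<open>The comma category over a trace\<close>

lemma maximal_commuting_superset:
  assumes "S \<subseteq> E" "commuting I S"
  obtains T where "maximal_commuting E I T" "S \<subseteq> T"
proof -
  define \<A> where "\<A> = {T. S \<subseteq> T \<and> T \<subseteq> E \<and> commuting I T}"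
  have "\<exists>M\<in>\<A>. \<forall>X\<in>\<A>. M \<subseteq> X \<longrightarrow> X = M"
  proof (rule subset_Zorn_nonempty)
    show "\<A> \<noteq> {}" using assms by (auto simp: \<A>_def)
  next
    fix \<C> assume "\<C> \<noteq> {}" and chain: "subset.chain \<A> \<C>"
    have "commuting I (\<Union>\<C>)"
      unfolding commuting_def
    proof (intro ballI impI)
      fix a b assume "a \<in> \<Union>\<C>" "b \<in> \<Union>\<C>" "a \<noteq> b"
      then obtain Ta Tb where T: "Ta \<in> \<C>" "Tb \<in> \<C>" "a \<in> Ta" "b \<in> Tb" by blast
      with chain have "Ta \<subseteq> Tb \<or> Tb \<subseteq> Ta" by (auto simp: subset_chain_def)
      with T obtain T where "T \<in> \<C>" "a \<in> T" "b \<in> T" by blast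
      then show "(a, b) \<in> I"
        using chain \<open>a \<noteq> b\<close> by (auto simp: subset_chain_def \<A>_def commuting_def)
    qed
    then show "\<Union>\<C> \<in> \<A>"
      using \<open>\<C> \<noteq> {}\<close> chain by (auto simp: subset_chain_def \<A>_def)
  qed
  then obtain M where M: "M \<in> \<A>" "\<And>X. X \<in> \<A> \<Longrightarrow> M \<subseteq> X \<Longrightarrow> X = M" by blast
  have "maximal_commuting E I M"
    unfolding maximal_commuting_def
  proof (intro conjI allI impI)
    show "M \<subseteq> E" "commuting I M" using M(1) by (auto simp: \<A>_def)
    fix T assume "T \<subseteq> E \<and> commuting I T \<and> M \<subseteq> T"
    then show "T = M" by (intro M(2)) (use M(1) in \<open>auto simp: \<A>_def\<close>)
  qed
  with M(1) show thesis by (auto simp: \<A>_def intro: that)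
qed

lemma trace_in_pcmon [simp]: "v \<in> lists E \<Longrightarrow> trace I v \<in> pcmon E I"
  by (simp add: pcmon_def)

lemma union_objs_iff: "c \<in> union_objs E I \<longleftrightarrow> (\<exists>v\<in>lists E. c = trace I v \<and> commuting I (set v))"
proof
  assume "c \<in> union_objs E I"
  then obtain v S where "c = trace I v" "maximal_commuting E I S" "v \<in> lists S"
    by (auto simp: union_objs_def)
  then show "\<exists>v\<in>lists E. c = trace I v \<and> commuting I (set v)"
    by (intro bexI[of _ v]) (auto simp: maximal_commuting_def commuting_def)
next
  assume "\<exists>v\<in>lists E. c = trace I v \<and> commuting I (set v)"
  then obtain v where v: "v \<in> lists E" "c = trace I v" "commuting I (set v)" by blast
  then have "set v \<subseteq> E" by auto
  then obtain S where "maximal_commuting E I S" "set v \<subseteq> S"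
    using v(3) by (rule maximal_commuting_superset)
  then show "c \<in> union_objs E I"
    unfolding union_objs_def using v(2) by blast
qed

text \<open>An object \<open>(c, f, g)\<close> of the comma category over \<open>w\<close> is a factorization \<open>g c f = w\<close>
  with \<open>c\<close> commuting. It is encoded by the ideals \<open>G \<subseteq> H\<close> of occurrences of \<open>w\<close>
  covered by \<open>g\<close> and by \<open>g c\<close>.\<close>

locale trace_comma = independence_relation I for I :: "('a \<times> 'a) set" +
  fixes E :: "'a set" and w :: "'a list"
  assumes w_in_lists: "w \<in> lists E"
begin

abbreviation objs :: "('a list set \<times> 'a list set \<times> 'a list set) set" where
  "objs \<equiv> comma_objs E I (trace I w)"

definition lower_ideal :: "'a list set \<times> 'a list set \<times> 'a list set \<Rightarrow> ('a \<times> nat) set" where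
  "lower_ideal x = occs_below (trace_count (snd (snd x)))"

definition upper_ideal :: "'a list set \<times> 'a list set \<times> 'a list set \<Rightarrow> ('a \<times> nat) set" where
  "upper_ideal x = occs_below (\<lambda>a. trace_count (snd (snd x)) a + trace_count (fst x) a)"

definition ideal_obj :: "('a \<times> nat) set \<Rightarrow> ('a \<times> nat) set \<Rightarrow> 'a list set \<times> 'a list set \<times> 'a list set" where
  "ideal_obj G H = (trace I (subword w (H - G)), trace I (subword w (- H)), trace I (subword w G))"

definition admissible :: "('a \<times> nat) set \<Rightarrow> ('a \<times> nat) set \<Rightarrow> bool" where
  "admissible G H \<longleftrightarrow> occ_ideal I w G \<and> occ_ideal I w H \<and> G \<subseteq> H \<and> commuting I (set (subword w (H - G)))"

lemma subword_in_lists: "subword w S \<in> lists E"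
  using w_in_lists set_subword_subset[of w S] by auto

lemma comma_objE:
  assumes "x \<in> objs"
  obtains g c f where "g \<in> lists E" "c \<in> lists E" "f \<in> lists E"
    "x = (trace I c, trace I f, trace I g)" "teq I (g @ c @ f) w" "commuting I (set c)"
proof -
  obtain c' f' g' where x: "x = (c', f', g')" by (cases x)
  then have "c' \<in> union_objs E I" "(f', g') \<in> fhom E I c' (trace I w)"
    using assms by (auto simp: comma_objs_def)
  then obtain c f g where "c \<in> lists E" "c' = trace I c" "commuting I (set c)"
    "f \<in> lists E" "g \<in> lists E" "f' = trace I f" "g' = trace I g"
    "tmult I (tmult I g' c') f' = trace I w"
    by (auto simp: union_objs_iff fhom_def pcmon_def)
  moreover from this have "teq I (g @ c @ f) w"
    by (simp add: tmult_trace trace_eq_iff)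
  ultimately show thesis using that x by blast
qed

lemma comma_obj_ideals:
  assumes "x \<in> objs"
  shows "admissible (lower_ideal x) (upper_ideal x)" "ideal_obj (lower_ideal x) (upper_ideal x) = x"
proof -
  obtain g c f where "g \<in> lists E" "c \<in> lists E" "f \<in> lists E"
    and x: "x = (trace I c, trace I f, trace I g)" and t: "teq I (g @ c @ f) w" and cm: "commuting I (set c)"
    by (rule comma_objE[OF assms])
  have t': "teq I ((g @ c) @ f) w" using t by simp
  have G: "lower_ideal x = occs_below (count_list g)"
    using x by (simp add: lower_ideal_def)
  have H: "upper_ideal x = occs_below (count_list (g @ c))"
    using x by (simp add: upper_ideal_def flip: count_list_append)
  have ideals: "occ_ideal I w (lower_ideal x)" "occ_ideal I w (upper_ideal x)"
    unfolding G H by (rule occ_ideal_prefix[OF t], rule occ_ideal_prefix[OF t'])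
  have GH: "lower_ideal x \<subseteq> upper_ideal x"
    unfolding G H by (rule occs_below_mono) simp
  have sG: "teq I (subword w (lower_ideal x)) g"
    unfolding G by (rule subword_prefix(1)[OF t])
  have sH: "teq I (subword w (upper_ideal x)) (g @ c)" and sF: "teq I (subword w (- upper_ideal x)) f"
    unfolding H by (rule subword_prefix(1)[OF t'], rule subword_prefix(2)[OF t'])
  have "teq I (subword w (upper_ideal x)) (subword w (lower_ideal x) @ subword w (upper_ideal x - lower_ideal x))"
    using subword_diff_split[OF occ_ideal_empty ideals(1) ideals(2) empty_subsetI GH] by simp
  then have "teq I (g @ c) (g @ subword w (upper_ideal x - lower_ideal x))"
    using teq_trans[OF teq_trans[OF teq_sym[OF sH]] teq_append[OF sG teq_refl]] by blast
  then have sC: "teq I (subword w (upper_ideal x - lower_ideal x)) c"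
    by (rule teq_sym[OF teq_cancel_left])
  show "admissible (lower_ideal x) (upper_ideal x)"
    using ideals GH cm teq_set[OF sC] by (simp add: admissible_def)
  show "ideal_obj (lower_ideal x) (upper_ideal x) = x"
    using sG sF sC x by (simp add: ideal_obj_def trace_eq_iff)
qed

lemma ideal_obj_in_objs:
  assumes "admissible G H"
  shows "ideal_obj G H \<in> objs"
proof -
  have G: "occ_ideal I w G" and H: "occ_ideal I w H" and "G \<subseteq> H"
    and cm: "commuting I (set (subword w (H - G)))"
    using assms by (auto simp: admissible_def)
  have "teq I w (subword w G @ subword w (UNIV - G))"
    using subword_diff_split[OF occ_ideal_empty G occ_ideal_UNIV] by simp
  moreover have "teq I (subword w (UNIV - G)) (subword w (H - G) @ subword w (- H))"
    using subword_diff_split[OF G H occ_ideal_UNIV \<open>G \<subseteq> H\<close>] by (simp add: Compl_eq_Diff_UNIV)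
  ultimately have "teq I w (subword w G @ subword w (H - G) @ subword w (- H))"
    by (rule teq_trans[OF _ teq_append[OF teq_refl]])
  then have "tmult I (tmult I (trace I (subword w G)) (trace I (subword w (H - G)))) (trace I (subword w (- H)))
      = trace I w"
    by (simp add: tmult_trace trace_eq_iff teq_sym)
  moreover have "trace I (subword w (H - G)) \<in> union_objs E I"
    using cm subword_in_lists by (auto simp: union_objs_iff)
  moreover have "trace I (subword w S) \<in> pcmon E I" for S
    using subword_in_lists by (simp add: pcmon_def)
  ultimately show ?thesis
    by (simp add: ideal_obj_def comma_objs_def fhom_def)
qed

lemma tmult_subword_diff:
  assumes "occ_ideal I w A" "occ_ideal I w B" "occ_ideal I w C" "A \<subseteq> B" "B \<subseteq> C"
  shows "tmult I (trace I (subword w (B - A))) (trace I (subword w (C - B))) = trace I (subword w (C - A))"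
  using subword_diff_split[OF assms] by (simp add: tmult_trace trace_eq_iff teq_sym)

lemma comma_hom_ideal_obj:
  assumes 1: "admissible G1 H1" and 2: "admissible G2 H2" and "G2 \<subseteq> G1" "H1 \<subseteq> H2"
  shows "(trace I (subword w (H2 - H1)), trace I (subword w (G1 - G2))) \<in> comma_hom E I (ideal_obj G1 H1) (ideal_obj G2 H2)"
proof -
  have ideals: "occ_ideal I w G1" "occ_ideal I w H1" "occ_ideal I w G2" "occ_ideal I w H2"
    and "G1 \<subseteq> H1" "G2 \<subseteq> H2"
    using 1 2 by (auto simp: admissible_def)
  note split = tmult_subword_diff
  have "tmult I (trace I (subword w (G1 - G2))) (trace I (subword w (H1 - G1))) = trace I (subword w (H1 - G2))"
    using ideals assms(3) \<open>G1 \<subseteq> H1\<close> by (intro split) auto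
  moreover have "tmult I (trace I (subword w (H1 - G2))) (trace I (subword w (H2 - H1))) = trace I (subword w (H2 - G2))"
    using ideals assms(3,4) \<open>G1 \<subseteq> H1\<close> by (intro split) auto
  ultimately have "tmult I (tmult I (trace I (subword w (G1 - G2))) (trace I (subword w (H1 - G1))))
      (trace I (subword w (H2 - H1))) = trace I (subword w (H2 - G2))"
    by simp
  moreover have "tmult I (trace I (subword w (H2 - H1))) (trace I (subword w (- H2))) = trace I (subword w (- H1))"
    using split[OF ideals(2,4) occ_ideal_UNIV assms(4)] by (simp add: Compl_eq_Diff_UNIV)
  moreover have "tmult I (trace I (subword w G2)) (trace I (subword w (G1 - G2))) = trace I (subword w G1)"
    using split[OF occ_ideal_empty ideals(3,1) _ assms(3)] by simp
  moreover have "trace I (subword w S) \<in> pcmon E I" for S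
    using subword_in_lists by (simp add: pcmon_def)
  ultimately show ?thesis
    by (simp add: comma_hom_def fhom_def fcomp_def ideal_obj_def)
qed

lemma comma_homE:
  assumes "h \<in> comma_hom E I x y"
    and "x = (trace I cx, trace I fx, trace I gx)" "y = (trace I cy, trace I fy, trace I gy)"
  obtains p q where "h = (trace I p, trace I q)" "p \<in> lists E" "q \<in> lists E"
    "teq I (q @ cx @ p) cy" "teq I (p @ fy) fx" "teq I (gy @ q) gx"
proof -
  obtain p q where h: "h = (trace I p, trace I q)" "p \<in> lists E" "q \<in> lists E"
    using assms(1) unfolding comma_hom_def fhom_def pcmon_def by blast
  then have "trace I (q @ cx @ p) = trace I cy" "trace I (p @ fy) = trace I fx" "trace I (gy @ q) = trace I gx"
    using assms by (auto simp: comma_hom_def fhom_def fcomp_def tmult_trace)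
  then have "teq I (q @ cx @ p) cy" "teq I (p @ fy) fx" "teq I (gy @ q) gx"
    by (simp_all only: trace_eq_iff)
  with h show thesis by (rule that)
qed

lemma comma_hom_ideals_mono:
  assumes "x \<in> objs" "y \<in> objs" "h \<in> comma_hom E I x y"
  shows "lower_ideal y \<subseteq> lower_ideal x" "upper_ideal x \<subseteq> upper_ideal y"
proof -
  obtain gx cx fx where x: "x = (trace I cx, trace I fx, trace I gx)" and tx: "teq I (gx @ cx @ fx) w"
    using assms(1) by (rule comma_objE)
  obtain gy cy fy where y: "y = (trace I cy, trace I fy, trace I gy)" and ty: "teq I (gy @ cy @ fy) w"
    using assms(2) by (rule comma_objE)
  obtain p q where "teq I (p @ fy) fx" "teq I (gy @ q) gx"
    using assms(3) x y by (rule comma_homE)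
  then have "count_list fx a = count_list p a + count_list fy a"
    "count_list gx a = count_list gy a + count_list q a"
    "count_list w a = count_list gx a + count_list cx a + count_list fx a"
    "count_list w a = count_list gy a + count_list cy a + count_list fy a" for a
    using teq_count_list[OF tx, of a] teq_count_list[OF ty, of a] by (auto dest!: teq_count_list[of _ _ a])
  then show "lower_ideal y \<subseteq> lower_ideal x" "upper_ideal x \<subseteq> upper_ideal y"
    using x y by (auto simp: lower_ideal_def upper_ideal_def intro!: occs_below_mono)
qed

lemma comma_hom_unique:
  assumes "y \<in> objs" "h1 \<in> comma_hom E I x y" "h2 \<in> comma_hom E I x y"
  shows "h1 = h2"
proof -
  obtain gy cy fy where y: "y = (trace I cy, trace I fy, trace I gy)"
    using assms(1) by (rule comma_objE)
  obtain p1 q1 p2 q2 where h: "h1 = (trace I p1, trace I q1)" "h2 = (trace I p2, trace I q2)"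
    using assms(2,3) by (auto simp: comma_hom_def fhom_def pcmon_def)
  have "fcomp I (snd y) h1 = fcomp I (snd y) h2"
    using assms(2,3) by (simp add: comma_hom_def)
  then have "teq I (p1 @ fy) (p2 @ fy)" "teq I (gy @ q1) (gy @ q2)"
    using h y by (simp_all add: fcomp_def tmult_trace trace_eq_iff)
  then have "teq I p1 p2" "teq I q1 q2"
    using teq_cancel_right[of p1 fy p2] teq_cancel_left[of gy q1 q2] by blast+
  then show ?thesis
    using h by (simp add: trace_eq_iff)
qed

lemma comma_hom_comp:
  assumes "x \<in> objs" "y \<in> objs" "z \<in> objs" "h1 \<in> comma_hom E I x y" "h2 \<in> comma_hom E I y z"
  shows "fcomp I h2 h1 \<in> comma_hom E I x z"
proof -
  obtain gx cx fx where x: "x = (trace I cx, trace I fx, trace I gx)"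
    using assms(1) by (rule comma_objE)
  obtain gy cy fy where y: "y = (trace I cy, trace I fy, trace I gy)"
    using assms(2) by (rule comma_objE)
  obtain gz cz fz where z: "z = (trace I cz, trace I fz, trace I gz)"
    using assms(3) by (rule comma_objE)
  obtain p1 q1 where h1: "h1 = (trace I p1, trace I q1)" "p1 \<in> lists E" "q1 \<in> lists E"
    and 1: "teq I (q1 @ cx @ p1) cy" "teq I (p1 @ fy) fx" "teq I (gy @ q1) gx"
    using assms(4) x y by (rule comma_homE)
  obtain p2 q2 where h2: "h2 = (trace I p2, trace I q2)" "p2 \<in> lists E" "q2 \<in> lists E"
    and 2: "teq I (q2 @ cy @ p2) cz" "teq I (p2 @ fz) fy" "teq I (gz @ q2) gy"
    using assms(5) y z by (rule comma_homE)
  have "teq I (q2 @ q1 @ cx @ p1 @ p2) cz"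
    using teq_trans[OF teq_context[OF 1(1), of q2 p2, simplified] 2(1)] by simp
  moreover have "teq I (p1 @ p2 @ fz) fx"
    using teq_trans[OF teq_context[OF 2(2), of p1 "[]", simplified] 1(2)] by simp
  moreover have "teq I (gz @ q2 @ q1) gx"
    using teq_trans[OF teq_context[OF 2(3), of "[]" q1, simplified] 1(3)] by simp
  ultimately show ?thesis
    using h1 h2 x z by (auto simp: comma_hom_def fhom_def fcomp_def tmult_trace trace_eq_iff)
qed

section \<open>Truncation to prefixes\<close>

lemma occ_ideal_independent:
  assumes G: "occ_ideal I w G" and "j < length w" "occs w ! j \<in> G"
    and p: "p \<in> set (take j (occs w))" "p \<notin> G"
  shows "(fst p, fst (occs w ! j)) \<in> I"
proof (rule ccontr)
  assume dep: "(fst p, fst (occs w ! j)) \<notin> I"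
  obtain i where i: "i < j" "p = occs w ! i"
    using p(1) \<open>j < length w\<close> by (auto simp: in_set_conv_nth occs_def)
  define P where "P q \<longleftrightarrow> fst q = fst p \<or> fst q = fst (occs w ! j)" for q :: "'a \<times> nat"
  define Q where "Q = filter P (occs w)"
  define ii where "ii = length (filter P (take i (occs w)))"
  define jj where "jj = length (filter P (take j (occs w)))"
  have Q: "Q = occs (proj_pair (fst p) (fst (occs w ! j)) w)"
    unfolding Q_def P_def by (simp add: occs_proj_pair)
  obtain m where cut: "\<forall>k<length Q. Q ! k \<in> G \<longleftrightarrow> k < m"
    using G dep unfolding occ_ideal_def cuts_prefix_def Q by blast
  have "Q ! ii = p" "Q ! jj = occs w ! j"
    using i \<open>j < length w\<close> by (simp_all add: Q_def ii_def jj_def P_def occs_def nth_filter_length_take)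
  moreover have "ii < jj"
    using i \<open>j < length w\<close> unfolding ii_def jj_def
    by (intro length_filter_take_less) (auto simp: P_def occs_def)
  moreover have "jj < length Q"
    using length_filter_take_less[of j "length (occs w)" "occs w" P] \<open>j < length w\<close>
    by (simp add: Q_def jj_def P_def occs_def)
  ultimately have "jj < m"
    using cut \<open>occs w ! j \<in> G\<close> by auto
  with \<open>ii < jj\<close> \<open>jj < length Q\<close> \<open>Q ! ii = p\<close> have "p \<in> G"
    using cut by auto
  with \<open>p \<notin> G\<close> show False ..
qed

definition prefix_occs :: "nat \<Rightarrow> ('a \<times> nat) set" where
  "prefix_occs j = occs_below (count_list (take j w))"

lemma occ_ideal_prefix_occs: "occ_ideal I w (prefix_occs j)"
  unfolding prefix_occs_def by (rule occ_ideal_prefix[of _ "drop j w"]) simp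

lemma prefix_occs_mono: "j \<le> j' \<Longrightarrow> prefix_occs j \<subseteq> prefix_occs j'"
  unfolding prefix_occs_def
  by (rule occs_below_mono) (metis count_list_append le_add1 le_add_diff_inverse take_add)

lemma prefix_occs_Int_occs: "prefix_occs j \<inter> set (occs w) = set (take j (occs w))"
proof -
  have "occs w = occs (take j w) @ occs_from (count_list (take j w)) (drop j w)"
    by (simp flip: occs_append)
  moreover note occs_append_below[of "take j w" "drop j w" "count_list (take j w)"]
  ultimately show ?thesis
    unfolding prefix_occs_def take_occs by auto
qed

lemma prefix_occs_0 [simp]: "prefix_occs 0 = {}"
  by (simp add: prefix_occs_def occs_below_def)

lemma occs_subset_prefix_occs: "set (occs w) \<subseteq> prefix_occs (length w)"
  using prefix_occs_Int_occs[of "length w"] by (auto simp: occs_def)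

lemma prefix_occs_Suc_cases:
  assumes "j' \<le> Suc j" "r \<in> prefix_occs j' \<inter> set (occs w)"
  shows "r \<in> set (take j (occs w)) \<or> r = occs w ! j \<and> j < length w"
proof -
  have "r \<in> set (take j' (occs w))"
    using assms(2) unfolding prefix_occs_Int_occs .
  then have r: "r \<in> set (take (Suc j) (occs w))"
    by (rule subsetD[OF set_take_subset_set_take[OF assms(1)]])
  have "length (occs w) = length w" by (simp add: occs_def)
  then have "set (take (Suc j) (occs w)) = (if j < length w then insert (occs w ! j) (set (take j (occs w)))
      else set (take j (occs w)))"
    by (simp add: take_Suc_conv_app_nth)
  with r show ?thesis by (auto split: if_splits)
qed

text \<open>Allowing the upper ideal one letter more than the lower one adds at most the occurrence
  \<open>occs w ! j\<close> to the middle factor; it commutes with the rest of the middle factor because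
  these earlier occurrences lie outside the ideal \<open>G\<close> that contains it.\<close>

lemma commuting_truncate:
  assumes "admissible G H" "j' \<le> Suc j"
  shows "commuting I (fst ` ((H \<inter> prefix_occs j' - G \<inter> prefix_occs j) \<inter> set (occs w)))"
    (is "commuting I (fst ` ?M)")
proof -
  have G: "occ_ideal I w G" and cm: "commuting I (fst ` ((H - G) \<inter> set (occs w)))"
    using assms(1) by (auto simp: admissible_def set_subword)
  have M_G: "r = occs w ! j \<and> j < length w" if "r \<in> ?M" "r \<in> G" for r
  proof -
    have "r \<notin> prefix_occs j \<inter> set (occs w)" "r \<in> prefix_occs j' \<inter> set (occs w)"
      using that by auto
    then show ?thesis
      using prefix_occs_Suc_cases[OF assms(2)] unfolding prefix_occs_Int_occs by blast
  qed
  have indep: "(fst q, fst p) \<in> I" if "p \<in> ?M" "p \<in> G" "q \<in> ?M" "q \<notin> G" for p q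
  proof -
    have p: "p = occs w ! j" "j < length w" using M_G that(1,2) by auto
    moreover have "q \<in> prefix_occs j' \<inter> set (occs w)"
      using that(3) by blast
    ultimately have "q \<in> set (take j (occs w))"
      using that(2,4) prefix_occs_Suc_cases[OF assms(2)] by blast
    with p G that(2,4) show ?thesis using occ_ideal_independent by blast
  qed
  show ?thesis
    unfolding commuting_def
  proof (intro ballI impI)
    fix a b assume "a \<in> fst ` ?M" "b \<in> fst ` ?M" "a \<noteq> b"
    then obtain p q where pq: "p \<in> ?M" "q \<in> ?M" "a = fst p" "b = fst q" by blast
    consider "p \<notin> G" "q \<notin> G" | "p \<in> G" "q \<notin> G" | "p \<notin> G" "q \<in> G" | "p \<in> G" "q \<in> G" by blast
    then show "(a, b) \<in> I"
    proof cases
      case 1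
      then show ?thesis using pq cm \<open>a \<noteq> b\<close> by (auto simp: commuting_def)
    next
      case 2
      then show ?thesis using pq indep[of p q] I_sym by blast
    next
      case 3
      then show ?thesis using pq indep[of q p] by blast
    next
      case 4
      then show ?thesis using pq M_G \<open>a \<noteq> b\<close> by blast
    qed
  qed
qed

lemma admissible_truncate:
  assumes "admissible G H" "j \<le> j'" "j' \<le> Suc j"
  shows "admissible (G \<inter> prefix_occs j) (H \<inter> prefix_occs j')"
proof -
  have "G \<subseteq> H" "occ_ideal I w G" "occ_ideal I w H"
    using assms(1) by (auto simp: admissible_def)
  moreover have "G \<inter> prefix_occs j \<subseteq> H \<inter> prefix_occs j'"
    using \<open>G \<subseteq> H\<close> prefix_occs_mono[OF assms(2)] by blast
  ultimately show ?thesis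
    using commuting_truncate[OF assms(1,3)]
    by (simp add: admissible_def set_subword occ_ideal_Int occ_ideal_prefix_occs)
qed

definition retraction :: "nat \<Rightarrow> 'a list set \<times> 'a list set \<times> 'a list set \<Rightarrow> 'a list set \<times> 'a list set \<times> 'a list set" where
  "retraction t x = ideal_obj (lower_ideal x \<inter> prefix_occs (t div 2)) (upper_ideal x \<inter> prefix_occs (Suc t div 2))"

lemma admissible_retraction:
  "x \<in> objs \<Longrightarrow> admissible (lower_ideal x \<inter> prefix_occs (t div 2)) (upper_ideal x \<inter> prefix_occs (Suc t div 2))"
  using admissible_truncate[OF comma_obj_ideals(1)] by simp

lemma retraction_in_objs: "x \<in> objs \<Longrightarrow> retraction t x \<in> objs"
  unfolding retraction_def by (rule ideal_obj_in_objs[OF admissible_retraction])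

lemma retraction_mono:
  assumes "x \<in> objs" "y \<in> objs" "comma_hom E I x y \<noteq> {}"
  shows "comma_hom E I (retraction t x) (retraction t y) \<noteq> {}"
proof -
  have "lower_ideal y \<subseteq> lower_ideal x" "upper_ideal x \<subseteq> upper_ideal y"
    using assms comma_hom_ideals_mono by blast+
  then show ?thesis
    unfolding retraction_def using assms(1,2)
    by (blast intro: comma_hom_ideal_obj admissible_retraction)
qed

lemma retraction_step:
  assumes "x \<in> objs"
  shows "even t \<Longrightarrow> comma_hom E I (retraction t x) (retraction (Suc t) x) \<noteq> {}"
    and "odd t \<Longrightarrow> comma_hom E I (retraction (Suc t) x) (retraction t x) \<noteq> {}"
proof -
  define G where "G s = lower_ideal x \<inter> prefix_occs (s div 2)" for s
  define H where "H s = upper_ideal x \<inter> prefix_occs (Suc s div 2)" for s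
  have retraction_eq: "retraction s x = ideal_obj (G s) (H s)" for s
    by (simp add: retraction_def G_def H_def)
  have adm: "admissible (G s) (H s)" for s
    unfolding G_def H_def by (rule admissible_retraction[OF assms])
  have "prefix_occs (t div 2) \<subseteq> prefix_occs (Suc t div 2)"
    "prefix_occs (Suc t div 2) \<subseteq> prefix_occs (Suc (Suc t) div 2)"
    by (intro prefix_occs_mono, presburger)+
  then have "G t \<subseteq> G (Suc t)" "H t \<subseteq> H (Suc t)"
    unfolding G_def H_def by auto
  moreover have "even t \<Longrightarrow> Suc t div 2 = t div 2" "odd t \<Longrightarrow> Suc (Suc t) div 2 = Suc t div 2"
    by presburger+
  then have "even t \<Longrightarrow> G (Suc t) = G t" "odd t \<Longrightarrow> H (Suc t) = H t"
    unfolding G_def H_def by simp_all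
  ultimately show "even t \<Longrightarrow> comma_hom E I (retraction t x) (retraction (Suc t) x) \<noteq> {}"
    and "odd t \<Longrightarrow> comma_hom E I (retraction (Suc t) x) (retraction t x) \<noteq> {}"
    unfolding retraction_eq using comma_hom_ideal_obj[OF adm adm] by (metis empty_iff order_refl)+
qed

lemma retraction_full: "x \<in> objs \<Longrightarrow> retraction (2 * length w) x = x"
proof -
  assume x: "x \<in> objs"
  have "subword w (S \<inter> prefix_occs (length w)) = subword w S" for S
    using occs_subset_prefix_occs by (intro subword_cong) blast
  moreover have "subword w (S \<inter> prefix_occs (length w) - T \<inter> prefix_occs (length w)) = subword w (S - T)"
    "subword w (- (S \<inter> prefix_occs (length w))) = subword w (- S)" for S T
    using occs_subset_prefix_occs by (intro subword_cong; blast)+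
  ultimately show ?thesis
    using comma_obj_ideals(2)[OF x] by (simp add: retraction_def ideal_obj_def)
qed

lemma retraction_0: "retraction 0 x = ideal_obj {} {}"
  by (simp add: retraction_def)

lemma admissible_empty: "admissible {} {}"
  by (simp add: admissible_def occ_ideal_empty commuting_def set_subword)

theorem comma_connected_acyclic: "connected_acyclic objs (comma_hom E I) (fcomp I)"
proof -
  interpret thin_category objs "comma_hom E I" "fcomp I"
  proof
    show "fcomp I g f \<in> comma_hom E I x z"
      if "x \<in> objs" "y \<in> objs" "z \<in> objs" "f \<in> comma_hom E I x y" "g \<in> comma_hom E I y z" for x y z f g
      using that by (rule comma_hom_comp)
    show "f = g" if "x \<in> objs" "y \<in> objs" "f \<in> comma_hom E I x y" "g \<in> comma_hom E I x y" for x y f g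
      using that(2-4) by (rule comma_hom_unique)
  qed
  define m where "m = 2 * length w"
  define F where "F k = retraction (m - k)" for k
  have "rel_acyclic objs arrow"
  proof (rule rel_acyclic_if_zigzag_contraction)
    show "F k ` objs \<subseteq> objs \<and> monotone_on objs arrow arrow (F k)" for k
      by (auto simp: F_def retraction_in_objs retraction_mono monotone_on_def)
    show "(\<forall>x\<in>objs. arrow (F k x) (F (Suc k) x)) \<or> (\<forall>x\<in>objs. arrow (F (Suc k) x) (F k x))" if "k < m" for k
    proof -
      obtain t where "F k = retraction (Suc t)" "F (Suc k) = retraction t"
        using \<open>k < m\<close> by (auto simp: F_def intro: that[of "m - Suc k"] simp: Suc_diff_Suc)
      then show ?thesis using retraction_step by (cases "even t") auto
    qed
    show "F 0 x = x" if "x \<in> objs" for x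
      using retraction_full[OF that] by (simp add: F_def m_def)
    show "F m x = ideal_obj {} {}" for x
      by (simp add: F_def retraction_0)
    show "ideal_obj {} {} \<in> objs" "arrow (ideal_obj {} {}) (ideal_obj {} {})"
      using comma_hom_ideal_obj[OF admissible_empty admissible_empty] ideal_obj_in_objs[OF admissible_empty]
      by auto
  qed
  then show ?thesis by (rule connected_acyclic_if_rel_acyclic)
qed

end

theorem mainTheorem3:
  fixes E :: "'a set" and I :: "('a \<times> 'a) set"
  assumes "I \<subseteq> E \<times> E" and "irrefl I" and "sym I"
  shows "\<forall>d \<in> pcmon E I. connected_acyclic (comma_objs E I d) (comma_hom E I) (fcomp I)"
proof
  fix d assume "d \<in> pcmon E I"
  then obtain w where "w \<in> lists E" "d = trace I w" by (auto simp: pcmon_def)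
  then interpret trace_comma I E w
    using assms(2,3) by unfold_locales auto
  show "connected_acyclic (comma_objs E I d) (comma_hom E I) (fcomp I)"
    using comma_connected_acyclic \<open>d = trace I w\<close> by simp
qed

end
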